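(* Consider the following family of Block MDPs with horizon $H$ and actions $\{0,1\}$. The policy class $\Pi$ consists of all open-loop policies $\pi\leftrightarrow(a_1,\dots,a_H)\in\{0,1\}^H$. For $\pi^\star\in\Pi$ and $\phi\in\Phi$, the MDP $M_{\pi^\star,\phi}$ has latent states $\mathcal{S}_h=\{g_h,b_h,d_h\}$, initial latent state $g_1$, latent transitions $g_h\to g_{h+1}$ if $a=\pi^\star_h$, $d_h\to d_{h+1}$ if $a=\pi^\star_h$, and every other pair $\to b_{h+1}$; rewards are zero except at layer $H$, where the reward is $1$ at $(g_H,\pi^\star_H)$, $1$ at $(d_H,a)$ for $a\ne\pi^\star_H$, $\mathrm{Ber}(1/2)$ at $(b_H,a)$ for any $a$, and $0$ otherwise. The observation space is $\mathcal{X}_h=\{x_h^{(1)},\dots,x_h^{(m)}\}$ with $m=2^{H+2}$; $\Phi$ is the set of decoders with $\phi(x)=g_1$ for all $x\in\mathcal{X}_1$ and, for each $h\ge2$, disjoint sets of exactly $2^H$ observations of $\mathcal{X}_h$ mapped to $g_h$ and to $d_h$ and the rest mapped to $b_h$; the emission is $\psi(s)=\mathrm{Unif}\{x:\phi(x)=s\}$. The reset distribution is $\mu_h=\mathrm{Unif}(\mathcal{X}_h)$. Let $\Theta_0=\{(\pi^\star,\phi):\pi^\star_H=0\}$, $\Theta_1=\{(\pi^\star,\phi):\pi^\star_H=1\}$. Then for any deterministic algorithm $\mathsf{Alg}$ that adaptively collects $T=2^{O(H)}$ samples via $\mu$-reset access, $$D_{\mathrm{TV}}\big(\Pr^{\m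athrm{Unif}(\Theta_0),\mathsf{Alg}},\Pr^{\mathrm{Unif}(\Theta_1),\mathsf{Alg}}\big)\le\frac{T^4H}{2^{H-10}}.$$
   Context: $\mu$-reset access: in each episode (one sample) the learner either starts from $x_1\sim\psi(g_1)$ or chooses a layer $h\ge2$ and starts from $x_h\sim\mu_h$, then chooses actions until layer $H$, observing the visited observations and rewards. $\mathsf{Alg}$ is deterministic: its choice of starting layer, each action and its final output policy are deterministic functions of previously observed data. For $\nu\in\Delta(\Theta)$ with $\Theta=\Pi\times\Phi$, $\Pr^{\nu,\mathsf{Alg}}$ is the joint law of all observed data and the returned policy when $\theta\sim\nu$ is drawn and $\mathsf{Alg}$ interacts with $M_\theta$. $D_{\mathrm{TV}}$ is total variation distance. *)

theory Defs
  imports "HOL-Probability.Probability"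
begin

datatype lat = Gs | Bs | Ds

text \<open>Conventions: layers are 1..H; actions are bool (False = 0, True = 1);
  an open-loop policy is a bool list of length H whose (h-1)-th entry is the action at layer h;
  observations of layer h are x_h^(i), represented by the index i-1 in {0..<m}; rewards lie in
  {0,1} and are represented by bool (True = 1).\<close>

definition nobs :: "nat \<Rightarrow> nat" where
  "nobs H = 2 ^ (H + 2)"

definition Pi_set :: "nat \<Rightarrow> bool list set" where
  "Pi_set H = {\<pi>. length \<pi> = H}"

text \<open>Decoders phi h x (layer h, observation index x); canonically Bs outside the relevant domain.\<close>
definition Phi_set :: "nat \<Rightarrow> (nat \<Rightarrow> nat \<Rightarrow> lat) set" where
  "Phi_set H = {\<phi>. (\<forall>h x. (h = 0 \<or> H < h \<or> nobs H \<le> x) \<longrightarrow> \<phi> h x = Bs)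
     \<and> (\<forall>x < nobs H. \<phi> 1 x = Gs)
     \<and> (\<forall>h. 2 \<le> h \<and> h \<le> H \<longrightarrow>
          card {x. x < nobs H \<and> \<phi> h x = Gs} = 2 ^ H \<and>
          card {x. x < nobs H \<and> \<phi> h x = Ds} = 2 ^ H)}"

type_synonym theta = "bool list \<times> (nat \<Rightarrow> nat \<Rightarrow> lat)"

definition Theta0 :: "nat \<Rightarrow> theta set" where
  "Theta0 H = {(\<pi>, \<phi>). \<pi> \<in> Pi_set H \<and> \<phi> \<in> Phi_set H \<and> \<pi> ! (H - 1) = False}"

definition Theta1 :: "nat \<Rightarrow> theta set" where
  "Theta1 H = {(\<pi>, \<phi>). \<pi> \<in> Pi_set H \<and> \<phi> \<in> Phi_set H \<and> \<pi> ! (H - 1) = True}"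

definition next_lat :: "bool list \<Rightarrow> nat \<Rightarrow> lat \<Rightarrow> bool \<Rightarrow> lat" where
  "next_lat \<pi> h s a = (case s of
       Gs \<Rightarrow> (if a = \<pi> ! (h - 1) then Gs else Bs)
     | Ds \<Rightarrow> (if a = \<pi> ! (h - 1) then Ds else Bs)
     | Bs \<Rightarrow> Bs)"

definition reward_pmf :: "nat \<Rightarrow> bool list \<Rightarrow> nat \<Rightarrow> lat \<Rightarrow> bool \<Rightarrow> bool pmf" where
  "reward_pmf H \<pi> h s a = (if h < H then return_pmf False else (case s of
       Gs \<Rightarrow> return_pmf (a = \<pi> ! (H - 1))
     | Ds \<Rightarrow> return_pmf (a \<noteq> \<pi> ! (H - 1))
     | Bs \<Rightarrow> bernoulli_pmf (1/2)))"

definition emit :: "nat \<Rightarrow> (nat \<Rightarrow> nat \<Rightarrow> lat) \<Rightarrow> nat \<Rightarrow> lat \<Rightarrow> nat pmf" where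
  "emit H \<phi> h s = pmf_of_set {x. x < nobs H \<and> \<phi> h x = s}"

definition reset :: "nat \<Rightarrow> nat pmf" where
  "reset H = pmf_of_set {..< nobs H}"

text \<open>One observed step: (observation, action, reward).\<close>
type_synonym step = "nat \<times> bool \<times> bool"
text \<open>An episode: (starting layer, observed steps from the starting layer up to layer H).\<close>
type_synonym episode = "nat \<times> step list"

text \<open>Roll out an episode from layer h with current observation x (latent = phi h x, the
  block structure), steps observed so far ps; act maps (steps so far, current obs) to an action.
  The first argument is fuel (number of remaining layers).\<close>
primrec gen :: "nat \<Rightarrow> nat \<Rightarrow> theta \<Rightarrow> (step list \<Rightarrow> nat \<Rightarrow> bool) \<Rightarrow> nat \<Rightarrow> nat
    \<Rightarrow> step list \<Rightarrow> step list pmf" where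
  "gen 0 H \<theta> act h x ps = return_pmf ps"
| "gen (Suc n) H \<theta> act h x ps =
     (let s = snd \<theta> h x; a = act ps x in
      bind_pmf (reward_pmf H (fst \<theta>) h s a) (\<lambda>r.
        let ps' = ps @ [(x, a, r)] in
        if H \<le> h then return_pmf ps'
        else bind_pmf (emit H (snd \<theta>) (Suc h) (next_lat (fst \<theta>) h s a))
               (\<lambda>x'. gen n H \<theta> act (Suc h) x' ps')))"

text \<open>One episode under mu-reset access: the deterministic algorithm chooses the start layer
  st hist (1 = start from psi(g_1); h >= 2 = start from mu_h) and actions act hist.\<close>
definition episode :: "nat \<Rightarrow> theta \<Rightarrow> (episode list \<Rightarrow> nat)
    \<Rightarrow> (episode list \<Rightarrow> step list \<Rightarrow> nat \<Rightarrow> bool) \<Rightarrow> episode list \<Rightarrow> episode pmf" where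
  "episode H \<theta> st act hist =
     (let h0 = st hist in
      bind_pmf (if h0 = 1 then emit H (snd \<theta>) 1 Gs else reset H) (\<lambda>x.
        map_pmf (\<lambda>ps. (h0, ps)) (gen (H + 1 - h0) H \<theta> (act hist) h0 x [])))"

primrec run :: "nat \<Rightarrow> theta \<Rightarrow> (episode list \<Rightarrow> nat)
    \<Rightarrow> (episode list \<Rightarrow> step list \<Rightarrow> nat \<Rightarrow> bool) \<Rightarrow> nat \<Rightarrow> episode list \<Rightarrow> episode list pmf" where
  "run H \<theta> st act 0 hist = return_pmf hist"
| "run H \<theta> st act (Suc n) hist =
     bind_pmf (episode H \<theta> st act hist) (\<lambda>e. run H \<theta> st act n (hist @ [e]))"

definition law :: "nat \<Rightarrow> theta \<Rightarrow> (episode list \<Rightarrow> nat)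
    \<Rightarrow> (episode list \<Rightarrow> step list \<Rightarrow> nat \<Rightarrow> bool) \<Rightarrow> (episode list \<Rightarrow> bool list) \<Rightarrow> nat
    \<Rightarrow> (episode list \<times> bool list) pmf" where
  "law H \<theta> st act out T = map_pmf (\<lambda>hs. (hs, out hs)) (run H \<theta> st act T [])"

definition mix_law :: "nat \<Rightarrow> theta set \<Rightarrow> (episode list \<Rightarrow> nat)
    \<Rightarrow> (episode list \<Rightarrow> step list \<Rightarrow> nat \<Rightarrow> bool) \<Rightarrow> (episode list \<Rightarrow> bool list) \<Rightarrow> nat
    \<Rightarrow> (episode list \<times> bool list) pmf" where
  "mix_law H \<Theta> st act out T = bind_pmf (pmf_of_set \<Theta>) (\<lambda>\<theta>. law H \<theta> st act out T)"

definition D_TV :: "'a pmf \<Rightarrow> 'a pmf \<Rightarrow> real" where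
  "D_TV p q = (SUP A. \<bar>measure_pmf.prob p A - measure_pmf.prob q A\<bar>)"

end

theory Submission
  imports Defs
begin

text \<open>Both mixtures are compared with a reference process in which every observation is uniform on
its layer and the final reward is a fair coin; this process does not depend on \<theta>. Relative to it,
the law of the data under \<open>M\<^sub>\<theta>\<close> has the density \<open>history_ratio H \<theta>\<close>, a product of reward and
emission likelihood ratios. Under the reference process, with probability \<open>1 - O(H T\<^sup>2 / 2\<^sup>H)\<close>
no observation is visited twice. On such histories, swapping two unvisited observations of a layer is
a bijection of the decoders that fixes the density accumulated so far, so averaging over the decoder
makes the latent state behind each fresh observation an almost exact sample of \<open>lat_mass\<close>. After
this averaging the reward ratios cancel, except for an episode that starts at layer 1 and follows
\<open>\<pi>\<close> for its first \<open>H - 1\<close> actions; as the last action of \<open>\<pi>\<close> is fixed by the class, each such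
episode affects at most one \<open>\<pi>\<close>. Hence both mixtures have density at least
\<open>1 - O((H T\<^sup>2 + T) / 2\<^sup>H)\<close> on collision-free histories, which bounds their distance to the
reference process, and to each other.\<close>

section \<open>Comparing discrete distributions\<close>

lemma pmf_bind_eq_single:
  assumes "\<And>z. y \<in> set_pmf (f z) \<Longrightarrow> z = z0"
  shows "pmf (bind_pmf p f) y = pmf p z0 * pmf (f z0) y"
proof -
  have single: "pmf (f z) y = indicator {z0} z * pmf (f z0) y" for z
  proof (cases "z = z0")
    case False
    with assms[of z] have "y \<notin> set_pmf (f z)" by blast
    with False show ?thesis by (simp add: set_pmf_iff)
  qed simp
  have "pmf (bind_pmf p f) y = (\<integral>z. indicator {z0} z * pmf (f z0) y \<partial>p)"
    unfolding pmf_bind by (rule Bochner_Integration.integral_cong[OF refl single])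
  then show ?thesis
    by (simp add: measure_pmf_single)
qed

lemma pmf_bind_scaled:
  assumes "\<And>z. pmf (f z) y = pmf (g z) y * c"
  shows "pmf (bind_pmf p f) y = pmf (bind_pmf p g) y * c"
  unfolding pmf_bind assms by simp

lemma measure_pmf_prob_bind:
  "measure_pmf.prob (bind_pmf p f) A = (\<integral>x. measure_pmf.prob (f x) A \<partial>p)"
proof -
  have "ennreal (measure_pmf.prob (bind_pmf p f) A) = (\<integral>\<^sup>+x. ennreal (measure_pmf.prob (f x) A) \<partial>p)"
    unfolding measure_pmf.emeasure_eq_measure[symmetric] by simp
  also have "\<dots> = ennreal (\<integral>x. measure_pmf.prob (f x) A \<partial>p)"
    by (intro nn_integral_eq_integral measure_pmf.integrable_const_bound[where B=1]) auto
  finally show ?thesis by simp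
qed

lemma measure_pmf_prob_bind_le:
  assumes "\<And>x. x \<in> set_pmf p \<Longrightarrow> measure_pmf.prob (f x) A \<le> c"
  shows "measure_pmf.prob (bind_pmf p f) A \<le> c"
  unfolding measure_pmf_prob_bind
  by (rule measure_pmf.integral_le_const)
    (auto intro: measure_pmf.integrable_const_bound[where B=1] simp: AE_measure_pmf_iff assms)

lemma measure_pmf_prob_bind_pmf_of_set:
  assumes "finite S" "S \<noteq> {}"
  shows "measure_pmf.prob (bind_pmf (pmf_of_set S) f) A = (\<Sum>x\<in>S. measure_pmf.prob (f x) A) / card S"
  using assms by (simp add: measure_pmf_prob_bind integral_pmf_of_set)

lemma measure_pmf_prob_bind_le_add:
  assumes "\<And>x. x \<in> set_pmf p \<Longrightarrow> x \<notin> A \<Longrightarrow> measure_pmf.prob (f x) B \<le> c" and "0 \<le> c"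
  shows "measure_pmf.prob (bind_pmf p f) B \<le> measure_pmf.prob p A + c"
proof -
  have bounded: "integrable (measure_pmf p) (\<lambda>x. indicator A x + c)"
    by (rule measure_pmf.integrable_const_bound[where B = "1 + \<bar>c\<bar>"]) (auto simp: indicator_def)
  have "AE x in p. measure_pmf.prob (f x) B \<le> indicator A x + c"
    unfolding AE_measure_pmf_iff
  proof
    fix x assume "x \<in> set_pmf p"
    have "measure_pmf.prob (f x) B \<le> 1 + c"
      using measure_pmf.prob_le_1[of "f x" B] assms(2) by linarith
    with \<open>x \<in> set_pmf p\<close> show "measure_pmf.prob (f x) B \<le> indicator A x + c"
      using assms(1) by (cases "x \<in> A") auto
  qed
  then have "(\<integral>x. measure_pmf.prob (f x) B \<partial>p) \<le> (\<integral>x. indicator A x + c \<partial>p)"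
    by (intro integral_mono_AE[OF measure_pmf.integrable_const_bound[where B = 1] bounded]) auto
  also have "\<dots> = measure_pmf.prob p A + c"
    by (subst Bochner_Integration.integral_add)
      (auto intro: measure_pmf.integrable_const_bound[where B = 1] simp: indicator_def)
  finally show ?thesis
    by (simp add: measure_pmf_prob_bind)
qed

lemma measure_pmf_scaled_le:
  assumes "\<And>x. x \<in> A \<Longrightarrow> c * pmf Q x \<le> pmf P x" "0 \<le> c"
  shows "c * measure_pmf.prob Q A \<le> measure_pmf.prob P A"
proof -
  have "c * measure_pmf.prob Q A = infsetsum (\<lambda>x. c * pmf Q x) A"
    unfolding measure_pmf_conv_infsetsum by (rule infsetsum_cmult_right[symmetric]) (rule pmf_abs_summable)
  also have "\<dots> \<le> infsetsum (pmf P) A"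
    by (rule infsetsum_mono) (use assms in auto)
  finally show ?thesis
    by (simp add: measure_pmf_conv_infsetsum)
qed

lemma measure_pmf_le_of_pmf_ge:
  assumes low: "\<And>x. x \<in> set_pmf Q \<Longrightarrow> x \<notin> B \<Longrightarrow> (1 - \<delta>) * pmf Q x \<le> pmf P x"
    and "0 \<le> \<delta>" "\<delta> \<le> 1"
  shows "measure_pmf.prob Q A \<le> measure_pmf.prob P A + measure_pmf.prob Q B + \<delta>"
proof -
  have "(1 - \<delta>) * measure_pmf.prob Q (A - B) \<le> measure_pmf.prob P (A - B)"
  proof (rule measure_pmf_scaled_le)
    fix x assume "x \<in> A - B"
    then show "(1 - \<delta>) * pmf Q x \<le> pmf P x"
      using low[of x] by (cases "x \<in> set_pmf Q") (auto simp: set_pmf_iff)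
  qed (use \<open>\<delta> \<le> 1\<close> in simp)
  moreover have "measure_pmf.prob P (A - B) \<le> measure_pmf.prob P A"
    by (rule measure_pmf.finite_measure_mono) auto
  moreover have "measure_pmf.prob Q A \<le> measure_pmf.prob Q B + measure_pmf.prob Q (A - B)"
    by (rule order_trans[OF measure_pmf.finite_measure_mono measure_Un_le]) auto
  moreover have "\<delta> * measure_pmf.prob Q (A - B) \<le> \<delta>"
    using \<open>0 \<le> \<delta>\<close> by (simp add: mult_left_le)
  ultimately show ?thesis
    by (simp add: algebra_simps)
qed

lemma abs_measure_pmf_diff_le_of_pmf_ge:
  assumes low: "\<And>x. x \<in> set_pmf Q \<Longrightarrow> x \<notin> B \<Longrightarrow> (1 - \<delta>) * pmf Q x \<le> pmf P x"
    and "0 \<le> \<delta>"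
  shows "\<bar>measure_pmf.prob P A - measure_pmf.prob Q A\<bar> \<le> measure_pmf.prob Q B + \<delta>"
proof (cases "\<delta> \<le> 1")
  case True
  have "measure_pmf.prob Q A \<le> measure_pmf.prob P A + measure_pmf.prob Q B + \<delta>"
    and "measure_pmf.prob Q (- A) \<le> measure_pmf.prob P (- A) + measure_pmf.prob Q B + \<delta>"
    using measure_pmf_le_of_pmf_ge[OF low \<open>0 \<le> \<delta>\<close> True] by blast+
  moreover have "measure_pmf.prob M (- A) = 1 - measure_pmf.prob M A" for M :: "'a pmf"
    using measure_pmf.prob_compl[of A M] by (simp add: Compl_eq_Diff_UNIV)
  ultimately show ?thesis
    by force
next
  case False
  then show ?thesis
    using measure_pmf.prob_le_1[of P A] measure_pmf.prob_le_1[of Q A]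
      measure_nonneg[of P A] measure_nonneg[of Q A] measure_nonneg[of Q B] by linarith
qed

section \<open>Decoders\<close>

lemma lat_UNIV: "(UNIV :: lat set) = {Gs, Bs, Ds}"
  using lat.exhaust by auto

instance lat :: finite
  by standard (simp add: lat_UNIV)

lemma sum_lat: "(\<Sum>l\<in>UNIV. f l) = f Gs + f Bs + (f Ds :: 'a :: comm_monoid_add)"
  by (simp add: lat_UNIV ac_simps)

text \<open>The fraction of the observations of a layer \<open>h \<ge> 2\<close> that a decoder in \<open>Phi_set H\<close> maps
  to \<open>l\<close>.\<close>
definition lat_mass :: "lat \<Rightarrow> real" where
  "lat_mass l = (case l of Bs \<Rightarrow> 1/2 | _ \<Rightarrow> 1/4)"

lemma lat_mass_pos: "0 < lat_mass l"
  by (cases l) (simp_all add: lat_mass_def)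

lemma lat_mass_nobs: "lat_mass l * real (nobs H) = (case l of Bs \<Rightarrow> 2 ^ (H + 1) | _ \<Rightarrow> 2 ^ H)"
  by (cases l) (simp_all add: lat_mass_def nobs_def power_add)

lemma two_power_le_lat_mass_nobs: "2 ^ H \<le> lat_mass l * real (nobs H)"
  by (cases l) (simp_all add: lat_mass_nobs)

lemma nobs_pos: "0 < nobs H"
  by (simp add: nobs_def)

lemma set_pmf_reset [simp]: "set_pmf (reset H) = {..<nobs H}"
  unfolding reset_def using nobs_pos[of H] by (intro set_pmf_of_set) auto

lemma pmf_reset: "pmf (reset H) x = (if x < nobs H then 1 / real (nobs H) else 0)"
proof -
  have "{..<nobs H} \<noteq> {}"
    using nobs_pos[of H] by auto
  then show ?thesis
    by (simp add: reset_def)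
qed

lemma measure_pmf_prob_bind_reset:
  "measure_pmf.prob (bind_pmf (reset H) f) A = (\<Sum>x<nobs H. measure_pmf.prob (f x) A) / nobs H"
  unfolding reset_def using nobs_pos[of H] by (subst measure_pmf_prob_bind_pmf_of_set) auto

lemma Phi_set_layer1: "\<phi> \<in> Phi_set H \<Longrightarrow> x < nobs H \<Longrightarrow> \<phi> 1 x = Gs"
  by (simp add: Phi_set_def)

lemma Phi_set_outside: "\<phi> \<in> Phi_set H \<Longrightarrow> h = 0 \<or> H < h \<or> nobs H \<le> x \<Longrightarrow> \<phi> h x = Bs"
  unfolding Phi_set_def by blast

lemma card_Phi_set_layer:
  assumes "\<phi> \<in> Phi_set H" "2 \<le> h" "h \<le> H"
  shows "real (card {x. x < nobs H \<and> \<phi> h x = l}) = lat_mass l * real (nobs H)"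
proof -
  let ?C = "\<lambda>l. {x. x < nobs H \<and> \<phi> h x = l}"
  have G: "card (?C Gs) = 2 ^ H" and D: "card (?C Ds) = 2 ^ H"
    using assms by (simp_all add: Phi_set_def)
  have "{..<nobs H} = ?C Gs \<union> ?C Ds \<union> ?C Bs"
    using lat.exhaust by auto
  then have "nobs H = card (?C Gs \<union> ?C Ds \<union> ?C Bs)"
    by (metis card_lessThan)
  also have "\<dots> = card (?C Gs) + card (?C Ds) + card (?C Bs)"
    by (subst card_Un_disjoint; auto)+
  finally have "card (?C Bs) = nobs H - 2 ^ H - 2 ^ H"
    using G D by linarith
  moreover have "nobs H = 4 * 2 ^ H" "(2::nat) ^ (H + 1) = 2 * 2 ^ H"
    by (simp_all add: nobs_def)
  ultimately have "card (?C Bs) = 2 ^ (H + 1)"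
    by linarith
  then show ?thesis
    using G D by (cases l) (simp_all add: lat_mass_nobs)
qed

lemma finite_Phi_set: "finite (Phi_set H)"
proof -
  let ?D = "{..H} \<times> {..<nobs H}"
  let ?extend = "\<lambda>L h x. if (h, x) \<in> ?D then L (h, x) else Bs"
  have "Phi_set H \<subseteq> ?extend ` (?D \<rightarrow>\<^sub>E UNIV)"
  proof
    fix \<phi> assume "\<phi> \<in> Phi_set H"
    show "\<phi> \<in> ?extend ` (?D \<rightarrow>\<^sub>E UNIV)"
    proof (rule image_eqI[where x = "restrict (case_prod \<phi>) ?D"])
      show "\<phi> = ?extend (restrict (case_prod \<phi>) ?D)"
        using \<open>\<phi> \<in> Phi_set H\<close> by (intro ext) (auto simp: Phi_set_outside)
    qed simp
  qed
  then show ?thesis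
    by (rule finite_subset) (intro finite_imageI finite_PiE; simp)
qed

lemma Phi_set_nonempty:
  assumes "1 \<le> H"
  shows "Phi_set H \<noteq> {}"
proof -
  define \<phi> where "\<phi> = (\<lambda>h x. if x < nobs H \<and> h = 1 then Gs
      else if x < nobs H \<and> 2 \<le> h \<and> h \<le> H \<and> x < 2 ^ H then Gs
      else if x < nobs H \<and> 2 \<le> h \<and> h \<le> H \<and> 2 ^ H \<le> x \<and> x < 2 * 2 ^ H then Ds else Bs)"
  have m: "nobs H = 4 * 2 ^ H"
    by (simp add: nobs_def)
  have "{x. x < nobs H \<and> \<phi> h x = Gs} = {..<2 ^ H}"
    and "{x. x < nobs H \<and> \<phi> h x = Ds} = {2 ^ H..<2 * 2 ^ H}" if "2 \<le> h" "h \<le> H" for h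
    using that by (auto simp: \<phi>_def m)
  with \<open>1 \<le> H\<close> have "\<phi> \<in> Phi_set H"
    by (auto simp: Phi_set_def \<phi>_def)
  then show ?thesis
    by blast
qed

lemma start_obs_eq_reset:
  assumes "\<phi> \<in> Phi_set H"
  shows "(if h = 1 then emit H \<phi> 1 Gs else reset H) = reset H"
proof -
  have "{x. x < nobs H \<and> \<phi> 1 x = Gs} = {..<nobs H}"
    using Phi_set_layer1[OF assms] by auto
  then show ?thesis
    by (simp add: emit_def reset_def)
qed

lemma pmf_emit:
  assumes "\<phi> \<in> Phi_set H" "2 \<le> h" "h \<le> H"
  shows "pmf (emit H \<phi> h l) x = pmf (reset H) x * (if \<phi> h x = l then 1 / lat_mass l else 0)"
proof -
  let ?C = "{x. x < nobs H \<and> \<phi> h x = l}"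
  have card: "real (card ?C) = lat_mass l * real (nobs H)"
    by (rule card_Phi_set_layer[OF assms])
  then have "?C \<noteq> {}"
    using lat_mass_pos[of l] nobs_pos[of H] by force
  then show ?thesis
    using card lat_mass_pos[of l] by (auto simp: emit_def pmf_reset indicator_def)
qed

section \<open>Likelihood ratios against a reference process\<close>

text \<open>The roll-out \<open>gen\<close> with the law \<open>R\<close> of the reward and the law \<open>E\<close> of the next observation as
  parameters.\<close>
primrec rollout :: "nat \<Rightarrow> nat \<Rightarrow> (nat \<Rightarrow> nat \<Rightarrow> bool \<Rightarrow> bool pmf) \<Rightarrow> (nat \<Rightarrow> nat \<Rightarrow> bool \<Rightarrow> nat pmf)
    \<Rightarrow> (step list \<Rightarrow> nat \<Rightarrow> bool) \<Rightarrow> nat \<Rightarrow> nat \<Rightarrow> step list \<Rightarrow> step list pmf" where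
  "rollout 0 H R E act h x ps = return_pmf ps"
| "rollout (Suc n) H R E act h x ps =
     (let a = act ps x in
      bind_pmf (R h x a) (\<lambda>r.
        let ps' = ps @ [(x, a, r)] in
        if H \<le> h then return_pmf ps'
        else bind_pmf (E h x a) (\<lambda>x'. rollout n H R E act (Suc h) x' ps')))"

lemma gen_eq_rollout:
  "gen n H \<theta> act h x ps = rollout n H
     (\<lambda>h x a. reward_pmf H (fst \<theta>) h (snd \<theta> h x) a)
     (\<lambda>h x a. emit H (snd \<theta>) (Suc h) (next_lat (fst \<theta>) h (snd \<theta> h x) a)) act h x ps"
proof (induction n arbitrary: h x ps)
  case (Suc n)
  show ?case
    unfolding gen.simps rollout.simps Let_def Suc.IH ..
qed simp

lemma rollout_prefix:
  assumes "ps \<in> set_pmf (rollout n H R E act h x ps0)"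
  shows "\<exists>new. ps = ps0 @ new \<and> (0 < n \<longrightarrow> (\<exists>a r rest. new = (x, a, r) # rest))"
  using assms
proof (induction n arbitrary: h x ps0)
  case (Suc n)
  then obtain r where
    "ps \<in> set_pmf (if H \<le> h then return_pmf (ps0 @ [(x, act ps0 x, r)])
       else bind_pmf (E h x (act ps0 x)) (\<lambda>x'. rollout n H R E act (Suc h) x' (ps0 @ [(x, act ps0 x, r)])))"
    by (auto simp: Let_def)
  then show ?case
    by (auto split: if_splits dest!: Suc.IH)
qed simp

fun steps_ratio :: "(nat \<Rightarrow> nat \<Rightarrow> bool \<Rightarrow> bool \<Rightarrow> real) \<Rightarrow> (nat \<Rightarrow> nat \<Rightarrow> bool \<Rightarrow> nat \<Rightarrow> real)
    \<Rightarrow> nat \<Rightarrow> step list \<Rightarrow> real" where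
  "steps_ratio \<rho> \<sigma> h [] = 1"
| "steps_ratio \<rho> \<sigma> h [(x, a, r)] = \<rho> h x a r"
| "steps_ratio \<rho> \<sigma> h ((x, a, r) # (x', a', r') # rest) =
     \<rho> h x a r * \<sigma> h x a x' * steps_ratio \<rho> \<sigma> (Suc h) ((x', a', r') # rest)"

lemma pmf_rollout_Suc:
  fixes ps ps0 :: "step list"
  defines "r0 \<equiv> snd (snd (ps ! length ps0))"
  shows "pmf (rollout (Suc n) H R E act h x ps0) ps = pmf (R h x (act ps0 x)) r0 *
    pmf (if H \<le> h then return_pmf (ps0 @ [(x, act ps0 x, r0)])
      else bind_pmf (E h x (act ps0 x)) (\<lambda>x'. rollout n H R E act (Suc h) x' (ps0 @ [(x, act ps0 x, r0)]))) ps"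
  unfolding rollout.simps Let_def
proof (rule pmf_bind_eq_single)
  fix r
  assume "ps \<in> set_pmf (if H \<le> h then return_pmf (ps0 @ [(x, act ps0 x, r)])
    else bind_pmf (E h x (act ps0 x)) (\<lambda>x'. rollout n H R E act (Suc h) x' (ps0 @ [(x, act ps0 x, r)])))"
  then have "\<exists>new. ps = ps0 @ (x, act ps0 x, r) # new"
    by (auto split: if_splits dest: rollout_prefix)
  then show "r = r0"
    by (auto simp: r0_def nth_append)
qed

lemma pmf_bind_rollout:
  fixes ps ps1 :: "step list"
  assumes "0 < n"
  defines "x0 \<equiv> fst (ps ! length ps1)"
  shows "pmf (bind_pmf M (\<lambda>x'. rollout n H R E act h x' ps1)) ps = pmf M x0 * pmf (rollout n H R E act h x0 ps1) ps"
  by (rule pmf_bind_eq_single) (use assms rollout_prefix in \<open>fastforce simp: nth_append\<close>)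

lemma pmf_rollout_ratio:
  assumes reward: "\<And>h x a r. pmf (R1 h x a) r = pmf (R0 h x a) r * \<rho> h x a r"
    and emission: "\<And>h' x a x'. h \<le> h' \<Longrightarrow> h' < H \<Longrightarrow> pmf (E1 h' x a) x' = pmf (E0 h' x a) x' * \<sigma> h' x a x'"
    and "h + n = H + 1"
  shows "pmf (rollout n H R1 E1 act h x ps0) ps =
    pmf (rollout n H R0 E0 act h x ps0) ps * steps_ratio \<rho> \<sigma> h (drop (length ps0) ps)"
  using emission \<open>h + n = H + 1\<close>
proof (induction n arbitrary: h x ps0)
  case (Suc n)
  define a where "a = act ps0 x"
  define r0 where "r0 = snd (snd (ps ! length ps0))"
  define ps1 where "ps1 = ps0 @ [(x, a, r0)]"
  define x0 where "x0 = fst (ps ! length ps1)"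
  have unfold: "pmf (rollout (Suc n) H R E act h x ps0) ps = pmf (R h x a) r0 *
      pmf (if H \<le> h then return_pmf ps1 else bind_pmf (E h x a) (\<lambda>x'. rollout n H R E act (Suc h) x' ps1)) ps"
    for R E
    unfolding a_def r0_def ps1_def by (rule pmf_rollout_Suc)
  show ?case
  proof (cases "H \<le> h")
    case True
    then show ?thesis
      unfolding unfold by (cases "ps = ps1") (simp_all add: reward ps1_def)
  next
    case False
    then have "0 < n"
      using Suc.prems(2) by simp
    have next_obs: "pmf (bind_pmf M (\<lambda>x'. rollout n H R E act (Suc h) x' ps1)) ps =
        pmf M x0 * pmf (rollout n H R E act (Suc h) x0 ps1) ps" for M R E
      unfolding x0_def using \<open>0 < n\<close> by (rule pmf_bind_rollout)
    have IH: "pmf (rollout n H R1 E1 act (Suc h) x0 ps1) ps =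
        pmf (rollout n H R0 E0 act (Suc h) x0 ps1) ps * steps_ratio \<rho> \<sigma> (Suc h) (drop (length ps1) ps)"
      using Suc.prems by (intro Suc.IH) auto
    have step: "pmf (E1 h x a) x0 = pmf (E0 h x a) x0 * \<sigma> h x a x0"
      using Suc.prems(1) False by simp
    show ?thesis
    proof (cases "ps \<in> set_pmf (rollout n H R0 E0 act (Suc h) x0 ps1)")
      case True
      then obtain a' r' rest where "ps = ps1 @ (x0, a', r') # rest"
        using rollout_prefix[OF True] \<open>0 < n\<close> by auto
      then have "steps_ratio \<rho> \<sigma> h (drop (length ps0) ps) =
          \<rho> h x a r0 * \<sigma> h x a x0 * steps_ratio \<rho> \<sigma> (Suc h) (drop (length ps1) ps)"
        by (simp add: ps1_def)
      then show ?thesis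
        using False unfolding unfold by (simp add: next_obs IH reward step)
    next
      case False
      then show ?thesis
        using \<open>\<not> H \<le> h\<close> unfolding unfold by (simp add: next_obs IH set_pmf_iff)
    qed
  qed
qed (auto simp: indicator_def)

text \<open>The reference process: uniform observations and, at layer \<open>H\<close>, a fair coin as reward.\<close>
definition ref_reward :: "nat \<Rightarrow> nat \<Rightarrow> bool pmf" where
  "ref_reward H h = (if h < H then return_pmf False else bernoulli_pmf (1/2))"

definition reward_ratio :: "nat \<Rightarrow> bool list \<Rightarrow> nat \<Rightarrow> lat \<Rightarrow> bool \<Rightarrow> bool \<Rightarrow> real" where
  "reward_ratio H \<pi> h l a r = (if h < H then 1 else 2 * pmf (reward_pmf H \<pi> h l a) r)"

definition emission_ratio :: "bool list \<Rightarrow> nat \<Rightarrow> lat \<Rightarrow> bool \<Rightarrow> lat \<Rightarrow> real" where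
  "emission_ratio \<pi> h l a l' = (if l' = next_lat \<pi> h l a then 1 / lat_mass l' else 0)"

definition episode_ratio :: "nat \<Rightarrow> theta \<Rightarrow> nat \<Rightarrow> step list \<Rightarrow> real" where
  "episode_ratio H \<theta> = steps_ratio
     (\<lambda>h x a r. reward_ratio H (fst \<theta>) h (snd \<theta> h x) a r)
     (\<lambda>h x a x'. emission_ratio (fst \<theta>) h (snd \<theta> h x) a (snd \<theta> (Suc h) x'))"

lemma episode_ratio_simps [simp]:
  "episode_ratio H \<theta> h [] = 1"
  "episode_ratio H \<theta> h [(x, a, r)] = reward_ratio H (fst \<theta>) h (snd \<theta> h x) a r"
  "episode_ratio H \<theta> h ((x, a, r) # (x', a', r') # rest) =
     reward_ratio H (fst \<theta>) h (snd \<theta> h x) a r * emission_ratio (fst \<theta>) h (snd \<theta> h x) a (snd \<theta> (Suc h) x')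
       * episode_ratio H \<theta> (Suc h) ((x', a', r') # rest)"
  by (simp_all add: episode_ratio_def)

definition history_ratio :: "nat \<Rightarrow> theta \<Rightarrow> episode list \<Rightarrow> real" where
  "history_ratio H \<theta> es = (\<Prod>e\<leftarrow>es. episode_ratio H \<theta> (fst e) (snd e))"

lemma reward_ratio_nonneg: "0 \<le> reward_ratio H \<pi> h l a r"
  by (simp add: reward_ratio_def)

lemma emission_ratio_nonneg: "0 \<le> emission_ratio \<pi> h l a l'"
  using lat_mass_pos[of l'] by (auto simp: emission_ratio_def)

lemma episode_ratio_nonneg: "0 \<le> episode_ratio H \<theta> h steps"
  by (induction "\<lambda>h x a r. reward_ratio H (fst \<theta>) h (snd \<theta> h x) a r"
      "\<lambda>h x a x'. emission_ratio (fst \<theta>) h (snd \<theta> h x) a (snd \<theta> (Suc h) x')" h steps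
      rule: steps_ratio.induct)
    (simp_all add: reward_ratio_nonneg emission_ratio_nonneg)

lemma history_ratio_nonneg: "0 \<le> history_ratio H \<theta> es"
  by (induction es) (simp_all add: history_ratio_def episode_ratio_nonneg)

lemma history_ratio_Cons [simp]:
  "history_ratio H \<theta> (e # es) = episode_ratio H \<theta> (fst e) (snd e) * history_ratio H \<theta> es"
  by (simp add: history_ratio_def)

lemma pmf_reward_pmf: "pmf (reward_pmf H \<pi> h l a) r = pmf (ref_reward H h) r * reward_ratio H \<pi> h l a r"
  by (auto simp: reward_ratio_def reward_pmf_def ref_reward_def)

lemma pmf_emit_next_lat:
  assumes "\<phi> \<in> Phi_set H" "1 \<le> h" "h < H"
  shows "pmf (emit H \<phi> (Suc h) (next_lat \<pi> h l a)) x = pmf (reset H) x * emission_ratio \<pi> h l a (\<phi> (Suc h) x)"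
  using pmf_emit[OF assms(1), of "Suc h"] assms by (simp add: emission_ratio_def)

definition ref_episode :: "nat \<Rightarrow> (episode list \<Rightarrow> nat) \<Rightarrow> (episode list \<Rightarrow> step list \<Rightarrow> nat \<Rightarrow> bool)
    \<Rightarrow> episode list \<Rightarrow> episode pmf" where
  "ref_episode H st act hist =
     bind_pmf (reset H) (\<lambda>x. map_pmf (\<lambda>ps. (st hist, ps))
       (rollout (H + 1 - st hist) H (\<lambda>h _ _. ref_reward H h) (\<lambda>_ _ _. reset H) (act hist) (st hist) x []))"

lemma pmf_map_Pair: "pmf (map_pmf (Pair a) M) (b, y) = (if a = b then pmf M y else 0)"
proof (cases "a = b")
  case True
  then show ?thesis
    by (simp add: pmf_map_inj' inj_on_def)
next
  case False
  then have "(b, y) \<notin> set_pmf (map_pmf (Pair a) M)"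
    by auto
  with False show ?thesis
    by (simp add: pmf_eq_0_set_pmf del: set_map_pmf)
qed

lemma pmf_episode_ratio:
  assumes "\<phi> \<in> Phi_set H" "1 \<le> st hist" "st hist \<le> H"
  shows "pmf (episode H (\<pi>, \<phi>) st act hist) e =
    pmf (ref_episode H st act hist) e * episode_ratio H (\<pi>, \<phi>) (fst e) (snd e)"
proof -
  let ?h0 = "st hist"
  have ratio: "pmf (gen (H + 1 - ?h0) H (\<pi>, \<phi>) (act hist) ?h0 x []) ps =
    pmf (rollout (H + 1 - ?h0) H (\<lambda>h _ _. ref_reward H h) (\<lambda>_ _ _. reset H) (act hist) ?h0 x []) ps
      * episode_ratio H (\<pi>, \<phi>) ?h0 (drop (length ([] :: step list)) ps)" for x ps
    unfolding gen_eq_rollout episode_ratio_def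
    by (rule pmf_rollout_ratio) (use assms in \<open>simp_all add: pmf_reward_pmf pmf_emit_next_lat\<close>)
  have mixed: "pmf (bind_pmf (reset H) (\<lambda>x. gen (H + 1 - ?h0) H (\<pi>, \<phi>) (act hist) ?h0 x [])) ps =
    pmf (bind_pmf (reset H) (\<lambda>x. rollout (H + 1 - ?h0) H (\<lambda>h _ _. ref_reward H h) (\<lambda>_ _ _. reset H)
      (act hist) ?h0 x [])) ps * episode_ratio H (\<pi>, \<phi>) ?h0 ps" for ps
    by (rule pmf_bind_scaled[OF ratio[unfolded list.size drop_0]])
  obtain h ps where "e = (h, ps)"
    by (cases e)
  then show ?thesis
    unfolding episode_def ref_episode_def Let_def start_obs_eq_reset[OF assms(1)] snd_conv
      map_bind_pmf[symmetric]
    by (simp only: pmf_map_Pair mixed) simp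
qed

primrec sample_episodes :: "(episode list \<Rightarrow> episode pmf) \<Rightarrow> nat \<Rightarrow> episode list \<Rightarrow> episode list pmf" where
  "sample_episodes E 0 hist = return_pmf hist"
| "sample_episodes E (Suc n) hist = bind_pmf (E hist) (\<lambda>e. sample_episodes E n (hist @ [e]))"

lemma run_eq_sample_episodes: "run H \<theta> st act n hist = sample_episodes (episode H \<theta> st act) n hist"
  by (induction n arbitrary: hist) simp_all

lemma sample_episodes_prefix:
  "hs \<in> set_pmf (sample_episodes E n hist) \<Longrightarrow> \<exists>es. hs = hist @ es \<and> length es = n"
  by (induction n arbitrary: hist) fastforce+

lemma pmf_sample_episodes_ratio:
  assumes "\<And>hist e. pmf (E1 hist) e = pmf (E0 hist) e * w e"
  shows "pmf (sample_episodes E1 n hist) hs =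
    pmf (sample_episodes E0 n hist) hs * (\<Prod>e\<leftarrow>drop (length hist) hs. w e)"
proof (induction n arbitrary: hist)
  case (Suc n)
  define e0 where "e0 = hs ! length hist"
  have unfold: "pmf (sample_episodes E (Suc n) hist) hs = pmf (E hist) e0 * pmf (sample_episodes E n (hist @ [e0])) hs" for E
    by (simp, rule pmf_bind_eq_single) (auto simp: e0_def nth_append dest: sample_episodes_prefix)
  show ?case
  proof (cases "hs \<in> set_pmf (sample_episodes E0 n (hist @ [e0]))")
    case True
    then have "drop (length hist) hs = e0 # drop (length (hist @ [e0])) hs"
      by (auto dest: sample_episodes_prefix)
    then show ?thesis
      unfolding unfold by (simp add: Suc.IH assms)
  next
    case False
    then show ?thesis
      unfolding unfold by (simp add: Suc.IH set_pmf_iff)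
  qed
qed (simp add: indicator_def)

lemma pmf_run_ratio:
  assumes "\<phi> \<in> Phi_set H" "\<forall>hs. 1 \<le> st hs \<and> st hs \<le> H"
  shows "pmf (run H (\<pi>, \<phi>) st act n []) hs =
    pmf (sample_episodes (ref_episode H st act) n []) hs * history_ratio H (\<pi>, \<phi>) hs"
  unfolding run_eq_sample_episodes history_ratio_def
  by (subst pmf_sample_episodes_ratio[OF pmf_episode_ratio]) (use assms in simp_all)

lemma pmf_mixture_ratio:
  assumes "finite \<Theta>" "\<Theta> \<noteq> {}" "snd ` \<Theta> \<subseteq> Phi_set H" "\<forall>hs. 1 \<le> st hs \<and> st hs \<le> H"
  shows "pmf (bind_pmf (pmf_of_set \<Theta>) (\<lambda>\<theta>. run H \<theta> st act n [])) hs =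
    pmf (sample_episodes (ref_episode H st act) n []) hs * ((\<Sum>\<theta>\<in>\<Theta>. history_ratio H \<theta> hs) / card \<Theta>)"
proof -
  have "pmf (run H \<theta> st act n []) hs = pmf (sample_episodes (ref_episode H st act) n []) hs * history_ratio H \<theta> hs"
    if "\<theta> \<in> \<Theta>" for \<theta>
    using that assms(3,4) pmf_run_ratio[of "snd \<theta>" H st "fst \<theta>" act n hs] by force
  then show ?thesis
    using assms(1,2) by (simp add: pmf_bind_pmf_of_set sum_distrib_left)
qed

section \<open>Repeated observations\<close>

fun step_obs :: "nat \<Rightarrow> step list \<Rightarrow> (nat \<times> nat) set" where
  "step_obs h [] = {}"
| "step_obs h (s # rest) = insert (h, fst s) (step_obs (Suc h) rest)"

definition episode_obs :: "episode \<Rightarrow> (nat \<times> nat) set" where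
  "episode_obs e = step_obs (fst e) (snd e)"

definition history_obs :: "episode list \<Rightarrow> (nat \<times> nat) set" where
  "history_obs es = (\<Union>e\<in>set es. episode_obs e)"

fun distinct_obs :: "episode list \<Rightarrow> bool" where
  "distinct_obs [] \<longleftrightarrow> True"
| "distinct_obs (e # es) \<longleftrightarrow> episode_obs e \<inter> history_obs es = {} \<and> distinct_obs es"

lemma finite_layer: "finite S \<Longrightarrow> finite {z. (h, z) \<in> S}"
  by (rule finite_subset[of _ "snd ` S"]) force+

lemma step_obs_layer_ge: "p \<in> step_obs h steps \<Longrightarrow> h \<le> fst p"
  by (induction h steps rule: step_obs.induct) auto

lemma finite_step_obs: "finite (step_obs h steps)"
  by (induction h steps rule: step_obs.induct) auto

lemma step_obs_obs_bound: "\<forall>s\<in>set steps. fst s < m \<Longrightarrow> p \<in> step_obs h steps \<Longrightarrow> snd p < m"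
  by (induction h steps rule: step_obs.induct) auto

lemma step_obs_layer_unique: "(h', z1) \<in> step_obs h steps \<Longrightarrow> (h', z2) \<in> step_obs h steps \<Longrightarrow> z1 = z2"
  by (induction h steps rule: step_obs.induct) (auto dest: step_obs_layer_ge)

lemma finite_history_obs: "finite (history_obs es)"
  by (simp add: history_obs_def episode_obs_def finite_step_obs)

lemma card_history_obs_layer: "card {z. (h, z) \<in> history_obs es} \<le> length es"
proof -
  have "card {z. (h, z) \<in> episode_obs e} \<le> 1" for e
  proof -
    have "finite {z. (h, z) \<in> episode_obs e}"
      by (simp add: finite_layer episode_obs_def finite_step_obs)
    then show ?thesis
      using step_obs_layer_unique[of h _ "fst e" "snd e"] by (auto simp: episode_obs_def card_le_Suc0_iff_eq)
  qed
  moreover have "{z. (h, z) \<in> history_obs es} = (\<Union>e\<in>set es. {z. (h, z) \<in> episode_obs e})"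
    by (auto simp: history_obs_def)
  ultimately have "card {z. (h, z) \<in> history_obs es} \<le> (\<Sum>e\<in>set es. 1)"
    by (metis (no_types, lifting) card_UN_le finite_set order_trans sum_mono)
  also have "\<dots> \<le> length es"
    by (simp add: card_length)
  finally show ?thesis .
qed

lemma distinct_obs_snoc:
  "distinct_obs (hist @ [e]) \<longleftrightarrow> distinct_obs hist \<and> episode_obs e \<inter> history_obs hist = {}"
  by (induction hist) (auto simp: history_obs_def)

definition wf_episode :: "nat \<Rightarrow> episode \<Rightarrow> bool" where
  "wf_episode H e \<longleftrightarrow> 1 \<le> fst e \<and> fst e \<le> H \<and> length (snd e) = H + 1 - fst e
     \<and> (\<forall>s\<in>set (snd e). fst s < nobs H)"

lemma rollout_reset_support:
  assumes "ps \<in> set_pmf (rollout n H R (\<lambda>_ _ _. reset H) act h x ps0)" "h + n = H + 1" "x < nobs H"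
  shows "length ps = length ps0 + n \<and> (\<forall>s\<in>set (drop (length ps0) ps). fst s < nobs H)"
  using assms
proof (induction n arbitrary: h x ps0)
  case (Suc n)
  then obtain r where r: "ps \<in> set_pmf (if H \<le> h then return_pmf (ps0 @ [(x, act ps0 x, r)])
      else bind_pmf (reset H) (\<lambda>x'. rollout n H R (\<lambda>_ _ _. reset H) act (Suc h) x' (ps0 @ [(x, act ps0 x, r)])))"
    by (auto simp: Let_def)
  show ?case
  proof (cases "H \<le> h")
    case True
    then show ?thesis
      using r Suc.prems by auto
  next
    case False
    with r obtain x' where "x' < nobs H"
      and ps: "ps \<in> set_pmf (rollout n H R (\<lambda>_ _ _. reset H) act (Suc h) x' (ps0 @ [(x, act ps0 x, r)]))"
      by auto
    moreover obtain new where "ps = ps0 @ [(x, act ps0 x, r)] @ new"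
      using rollout_prefix[OF ps] by auto
    ultimately show ?thesis
      using Suc.IH[OF ps] Suc.prems by auto
  qed
qed simp

lemma ref_episode_wf:
  assumes "e \<in> set_pmf (ref_episode H st act hist)" "1 \<le> st hist" "st hist \<le> H"
  shows "wf_episode H e"
proof -
  from assms(1) obtain x ps where "x < nobs H" "e = (st hist, ps)" and ps:
    "ps \<in> set_pmf (rollout (H + 1 - st hist) H (\<lambda>h _ _. ref_reward H h) (\<lambda>_ _ _. reset H) (act hist) (st hist) x [])"
    by (auto simp: ref_episode_def)
  with rollout_reset_support[OF ps] assms(2,3) show ?thesis
    by (auto simp: wf_episode_def)
qed

lemma sample_episodes_support:
  assumes "\<And>hist e. e \<in> set_pmf (E hist) \<Longrightarrow> P e"
  shows "hs \<in> set_pmf (sample_episodes E n hist) \<Longrightarrow> \<forall>e\<in>set (drop (length hist) hs). P e"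
proof (induction n arbitrary: hist)
  case (Suc n)
  then obtain e where e: "e \<in> set_pmf (E hist)" and hs: "hs \<in> set_pmf (sample_episodes E n (hist @ [e]))"
    by auto
  then have "drop (length hist) hs = e # drop (length (hist @ [e])) hs"
    by (auto dest: sample_episodes_prefix)
  then show ?case
    using Suc.IH[OF hs] assms[OF e] by simp
qed simp

lemma sum_indicator_layer_le:
  fixes S :: "(nat \<times> nat) set"
  assumes "finite S"
  shows "(\<Sum>x<m. indicator S (h, x) :: real) \<le> card {z. (h, z) \<in> S}"
proof -
  have "card ({..<m} \<inter> {x. (h, x) \<in> S}) \<le> card {z. (h, z) \<in> S}"
    by (rule card_mono[OF finite_layer[OF assms]]) auto
  moreover have "(\<Sum>x<m. indicator S (h, x) :: real) = real (card ({..<m} \<inter> {x. (h, x) \<in> S}))"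
    unfolding indicator_def by (rule sum_of_bool_eq) simp_all
  ultimately show ?thesis
    by linarith
qed

lemma measure_pmf_prob_bind_reset_le:
  fixes S :: "(nat \<times> nat) set"
  assumes "\<And>x. measure_pmf.prob (f x) B \<le> indicator S (h, x) + c" "finite S" "card {z. (h, z) \<in> S} \<le> \<kappa>"
  shows "measure_pmf.prob (bind_pmf (reset H) f) B \<le> \<kappa> / nobs H + c"
proof -
  have "measure_pmf.prob (bind_pmf (reset H) f) B \<le> (\<Sum>x<nobs H. indicator S (h, x) + c) / nobs H"
    unfolding measure_pmf_prob_bind_reset by (intro divide_right_mono sum_mono assms(1)) simp
  also have "\<dots> \<le> \<kappa> / nobs H + c"
    using sum_indicator_layer_le[OF assms(2), where m = "nobs H" and h = h] assms(3) nobs_pos[of H]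
    by (simp add: sum.distrib add_divide_distrib divide_right_mono)
  finally show ?thesis .
qed

lemma rollout_reset_hit_prob:
  assumes layer: "\<And>h'. card {z. (h', z) \<in> S} \<le> \<kappa>" and "finite S"
  shows "measure_pmf.prob (rollout n H R (\<lambda>_ _ _. reset H) act h x ps0)
      {ps. step_obs h (drop (length ps0) ps) \<inter> S \<noteq> {}}
    \<le> indicator S (h, x) + real n * \<kappa> / nobs H"
proof (induction n arbitrary: h x ps0)
  case (Suc n)
  let ?hit = "\<lambda>h ps0. {ps. step_obs h (drop (length ps0) ps) \<inter> S \<noteq> {}}"
  show ?case
  proof (cases "(h, x) \<in> S")
    case False
    let ?a = "act ps0 x"
    have "measure_pmf.prob (if H \<le> h then return_pmf (ps0 @ [(x, ?a, r)])
        else bind_pmf (reset H) (\<lambda>x'. rollout n H R (\<lambda>_ _ _. reset H) act (Suc h) x' (ps0 @ [(x, ?a, r)])))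
        (?hit h ps0) \<le> real (Suc n) * \<kappa> / nobs H" for r
    proof (cases "H \<le> h")
      case True
      with False show ?thesis
        by simp
    next
      case later: False
      let ?ps1 = "ps0 @ [(x, ?a, r)]"
      let ?M = "\<lambda>x'. rollout n H R (\<lambda>_ _ _. reset H) act (Suc h) x' ?ps1"
      have "ps \<in> ?hit h ps0 \<longleftrightarrow> ps \<in> ?hit (Suc h) ?ps1" if ps: "ps \<in> set_pmf (?M x')" for ps x'
      proof -
        obtain new where "ps = ?ps1 @ new"
          using rollout_prefix[OF ps] by blast
        then show ?thesis
          using False by auto
      qed
      then have "?hit h ps0 \<inter> set_pmf (?M x') = ?hit (Suc h) ?ps1 \<inter> set_pmf (?M x')" for x'
        by blast
      then have "measure_pmf.prob (?M x') (?hit h ps0) \<le> indicator S (Suc h, x') + real n * \<kappa> / nobs H" for x'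
        using Suc.IH[of "Suc h" x' ?ps1] by (metis measure_Int_set_pmf)
      then have "measure_pmf.prob (bind_pmf (reset H) ?M) (?hit h ps0) \<le> \<kappa> / nobs H + real n * \<kappa> / nobs H"
        using \<open>finite S\<close> layer by (rule measure_pmf_prob_bind_reset_le)
      with later show ?thesis
        by (simp add: add_divide_distrib algebra_simps)
    qed
    then show ?thesis
      using False by (simp add: Let_def measure_pmf_prob_bind_le)
  qed (intro order_trans[OF measure_pmf.prob_le_1], simp)
qed simp

lemma ref_episode_hit_prob:
  assumes layer: "\<And>h. card {z. (h, z) \<in> S} \<le> \<kappa>" and "finite S" "1 \<le> st hist" "st hist \<le> H"
  shows "measure_pmf.prob (ref_episode H st act hist) {e. episode_obs e \<inter> S \<noteq> {}} \<le> real (H + 1) * \<kappa> / nobs H"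
proof -
  let ?h0 = "st hist"
  let ?M = "\<lambda>x. rollout (H + 1 - ?h0) H (\<lambda>h _ _. ref_reward H h) (\<lambda>_ _ _. reset H) (act hist) ?h0 x []"
  have "measure_pmf.prob (map_pmf (Pair ?h0) (?M x)) {e. episode_obs e \<inter> S \<noteq> {}}
      \<le> indicator S (?h0, x) + real H * \<kappa> / nobs H" for x
  proof -
    have "measure_pmf.prob (?M x) {ps. step_obs ?h0 (drop (length ([] :: step list)) ps) \<inter> S \<noteq> {}}
        \<le> indicator S (?h0, x) + real (H + 1 - ?h0) * \<kappa> / nobs H"
      by (rule rollout_reset_hit_prob[OF layer \<open>finite S\<close>])
    also have "\<dots> \<le> indicator S (?h0, x) + real H * \<kappa> / nobs H"
      using assms(3,4) by (simp add: divide_right_mono mult_right_mono)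
    finally show ?thesis
      by (simp add: episode_obs_def vimage_def)
  qed
  then have "measure_pmf.prob (ref_episode H st act hist) {e. episode_obs e \<inter> S \<noteq> {}} \<le> \<kappa> / nobs H + real H * \<kappa> / nobs H"
    unfolding ref_episode_def using \<open>finite S\<close> layer by (rule measure_pmf_prob_bind_reset_le)
  then show ?thesis
    by (simp add: add_divide_distrib algebra_simps)
qed

lemma ref_collision_prob:
  assumes st: "\<forall>hs. 1 \<le> st hs \<and> st hs \<le> H" and "distinct_obs hist"
  shows "measure_pmf.prob (sample_episodes (ref_episode H st act) n hist) {hs. \<not> distinct_obs hs}
    \<le> real (H + 1) * n * (length hist + n) / nobs H"
  using \<open>distinct_obs hist\<close>
proof (induction n arbitrary: hist)
  case (Suc n)
  let ?L = "length hist"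
  have "measure_pmf.prob (sample_episodes (ref_episode H st act) (Suc n) hist) {hs. \<not> distinct_obs hs}
      \<le> measure_pmf.prob (ref_episode H st act hist) {e. episode_obs e \<inter> history_obs hist \<noteq> {}}
        + real (H + 1) * n * (Suc ?L + n) / nobs H"
    unfolding sample_episodes.simps
  proof (rule measure_pmf_prob_bind_le_add)
    fix e assume "e \<notin> {e. episode_obs e \<inter> history_obs hist \<noteq> {}}"
    with Suc.prems have "distinct_obs (hist @ [e])"
      by (simp add: distinct_obs_snoc)
    from Suc.IH[OF this] show "measure_pmf.prob (sample_episodes (ref_episode H st act) n (hist @ [e]))
        {hs. \<not> distinct_obs hs} \<le> real (H + 1) * n * (Suc ?L + n) / nobs H"
      by simp
  qed simp
  also have "\<dots> \<le> real (H + 1) * ?L / nobs H + real (H + 1) * n * (Suc ?L + n) / nobs H"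
    using ref_episode_hit_prob[OF card_history_obs_layer finite_history_obs] st by simp
  also have "\<dots> = real (H + 1) * (?L + n * (Suc ?L + n)) / nobs H"
    by (simp add: algebra_simps add_divide_distrib)
  also have "\<dots> \<le> real (H + 1) * (Suc n * (?L + Suc n)) / nobs H"
    by (intro divide_right_mono mult_left_mono) (simp_all add: algebra_simps)
  finally show ?case
    by (simp only: mult.assoc of_nat_mult)
qed simp

section \<open>Averaging over decoders\<close>

definition depends_only :: "(nat \<times> nat) set \<Rightarrow> ((nat \<Rightarrow> nat \<Rightarrow> lat) \<Rightarrow> real) \<Rightarrow> bool" where
  "depends_only S F \<longleftrightarrow> (\<forall>\<phi> \<phi>'. (\<forall>(h, x)\<in>S. \<phi> h x = \<phi>' h x) \<longrightarrow> F \<phi> = F \<phi>')"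

definition swap_obs :: "nat \<Rightarrow> nat \<Rightarrow> nat \<Rightarrow> (nat \<Rightarrow> nat \<Rightarrow> lat) \<Rightarrow> nat \<Rightarrow> nat \<Rightarrow> lat" where
  "swap_obs h y z \<phi> = (\<lambda>h' x. if h' = h then \<phi> h (Transposition.transpose y z x) else \<phi> h' x)"

lemma swap_obs_swap_obs [simp]: "swap_obs h y z (swap_obs h y z \<phi>) = \<phi>"
  by (simp add: swap_obs_def fun_eq_iff)

lemma card_transpose_lessThan:
  assumes "y < m" "z < m"
  shows "card {x. x < m \<and> P (Transposition.transpose y z x)} = card {x. x < m \<and> P x}"
proof -
  have "{x. x < m \<and> P (Transposition.transpose y z x)} = Transposition.transpose y z ` {x. x < m \<and> P x}"
    using assms by (auto simp: image_iff Transposition.transpose_def)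
  then show ?thesis
    by (simp add: card_image inj_on_subset[OF inj_transpose])
qed

lemma swap_obs_Phi_set:
  assumes "\<phi> \<in> Phi_set H" "2 \<le> h" "h \<le> H" "y < nobs H" "z < nobs H"
  shows "swap_obs h y z \<phi> \<in> Phi_set H"
proof -
  have "Transposition.transpose y z x = x" if "nobs H \<le> x" for x
    using that assms(4,5) by (simp add: Transposition.transpose_def)
  moreover have "card {x. x < nobs H \<and> swap_obs h y z \<phi> h' x = l} = card {x. x < nobs H \<and> \<phi> h' x = l}" for h' l
    using card_transpose_lessThan[OF assms(4,5), of "\<lambda>x. \<phi> h x = l"]
    by (cases "h' = h") (simp_all add: swap_obs_def)
  ultimately show ?thesis
    using assms(1-3) by (auto simp: Phi_set_def swap_obs_def)
qed

lemma lat_mass_one_sub_le: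
  "lat_mass l * (1 - real n / 2 ^ H) \<le> (lat_mass l * real (nobs H) - n) / nobs H"
proof -
  let ?K = "lat_mass l * real (nobs H)"
  have "real n / nobs H = lat_mass l * n / ?K"
    using lat_mass_pos[of l] nobs_pos[of H] by simp
  also have "\<dots> \<le> lat_mass l * n / 2 ^ H"
    using lat_mass_pos[of l] nobs_pos[of H] two_power_le_lat_mass_nobs[of H l]
    by (intro divide_left_mono mult_pos_pos) auto
  finally show ?thesis
    using lat_mass_pos[of l] nobs_pos[of H] by (simp add: diff_divide_distrib right_diff_distrib)
qed

lemma sum_Phi_set_swap_obs:
  assumes "2 \<le> h" "h \<le> H" "y < nobs H" "z < nobs H" "(h, y) \<notin> S" "(h, z) \<notin> S" "depends_only S A"
  shows "(\<Sum>\<phi>\<in>Phi_set H. A \<phi> * of_bool (\<phi> h z = l)) = (\<Sum>\<phi>\<in>Phi_set H. A \<phi> * of_bool (\<phi> h y = l))"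
proof -
  have "bij_betw (swap_obs h y z) (Phi_set H) (Phi_set H)"
    by (rule bij_betwI[where g = "swap_obs h y z"]) (use assms in \<open>auto intro: swap_obs_Phi_set\<close>)
  then have "(\<Sum>\<phi>\<in>Phi_set H. A \<phi> * of_bool (\<phi> h z = l))
      = (\<Sum>\<phi>\<in>Phi_set H. A (swap_obs h y z \<phi>) * of_bool (swap_obs h y z \<phi> h z = l))"
    by (rule sum.reindex_bij_betw[symmetric])
  moreover have "A (swap_obs h y z \<phi>) = A \<phi>" for \<phi>
  proof -
    have "\<forall>(h', x)\<in>S. swap_obs h y z \<phi> h' x = \<phi> h' x"
      using assms(5,6) by (auto simp: swap_obs_def Transposition.transpose_def)
    then show ?thesis
      using \<open>depends_only S A\<close> unfolding depends_only_def by blast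
  qed
  ultimately show ?thesis
    by (simp add: swap_obs_def)
qed

lemma card_fresh_layer_ge:
  assumes "\<phi> \<in> Phi_set H" "2 \<le> h" "h \<le> H" "finite S" "card {z. (h, z) \<in> S} \<le> n"
  shows "lat_mass l * real (nobs H) - n \<le> card ({z. z < nobs H \<and> (h, z) \<notin> S} \<inter> {z. \<phi> h z = l})"
proof -
  let ?F = "{z. z < nobs H \<and> (h, z) \<notin> S} \<inter> {z. \<phi> h z = l}"
  have "{z. z < nobs H \<and> \<phi> h z = l} \<subseteq> ?F \<union> {z. (h, z) \<in> S}"
    by auto
  moreover have "finite (?F \<union> {z. (h, z) \<in> S})"
    using finite_layer[OF assms(4)] by auto
  ultimately have "card {z. z < nobs H \<and> \<phi> h z = l} \<le> card ?F + card {z. (h, z) \<in> S}"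
    by (meson card_Un_le card_mono order_trans)
  then show ?thesis
    using card_Phi_set_layer[OF assms(1-3), of l] assms(5) by linarith
qed

text \<open>Swapping \<open>y\<close> with any observation \<open>z\<close> of layer \<open>h\<close> outside \<open>S\<close> permutes \<open>Phi_set H\<close> and
  fixes \<open>A\<close>, so the right-hand side does not change if \<open>y\<close> is replaced by \<open>z\<close>; averaging over all
  such \<open>z\<close> counts the observations of layer \<open>h\<close> that are decoded to \<open>l\<close>.\<close>
lemma sum_Phi_set_obs_eq_ge:
  fixes A :: "(nat \<Rightarrow> nat \<Rightarrow> lat) \<Rightarrow> real"
  assumes "2 \<le> h" "h \<le> H" "y < nobs H" "(h, y) \<notin> S" "finite S" "card {z. (h, z) \<in> S} \<le> n"
    and "depends_only S A" "\<And>\<phi>. 0 \<le> A \<phi>"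
  shows "lat_mass l * (1 - n / 2 ^ H) * (\<Sum>\<phi>\<in>Phi_set H. A \<phi>) \<le> (\<Sum>\<phi>\<in>Phi_set H. A \<phi> * of_bool (\<phi> h y = l))"
proof -
  let ?P = "Phi_set H"
  let ?Z = "{z. z < nobs H \<and> (h, z) \<notin> S}"
  let ?K = "lat_mass l * real (nobs H)"
  define X where "X = (\<Sum>\<phi>\<in>?P. A \<phi> * of_bool (\<phi> h y = l))"
  have "finite ?Z"
    by (rule finite_subset[of _ "{..<nobs H}"]) auto
  have "(?K - n) * (\<Sum>\<phi>\<in>?P. A \<phi>) = (\<Sum>\<phi>\<in>?P. A \<phi> * (?K - n))"
    by (simp add: sum_distrib_right mult.commute)
  also have "\<dots> \<le> (\<Sum>\<phi>\<in>?P. A \<phi> * card (?Z \<inter> {z. \<phi> h z = l}))"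
    using assms by (intro sum_mono mult_left_mono card_fresh_layer_ge)
  also have "\<dots> = (\<Sum>\<phi>\<in>?P. \<Sum>z\<in>?Z. A \<phi> * of_bool (\<phi> h z = l))"
    using \<open>finite ?Z\<close> by (simp add: sum_distrib_left[symmetric] mult.commute)
  also have "\<dots> = (\<Sum>z\<in>?Z. \<Sum>\<phi>\<in>?P. A \<phi> * of_bool (\<phi> h z = l))"
    by (rule sum.swap)
  also have "\<dots> = card ?Z * X"
    using sum_Phi_set_swap_obs[OF assms(1-3) _ assms(4) _ assms(7)] by (simp add: X_def)
  also have "\<dots> \<le> nobs H * X"
    using card_mono[of "{..<nobs H}" ?Z] assms(8)
    by (intro mult_right_mono) (auto simp: X_def intro: sum_nonneg)
  finally have "(?K - n) / nobs H * (\<Sum>\<phi>\<in>?P. A \<phi>) \<le> X"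
    using nobs_pos[of H] by (simp add: divide_le_eq mult.commute)
  moreover have "lat_mass l * (1 - n / 2 ^ H) * (\<Sum>\<phi>\<in>?P. A \<phi>) \<le> (?K - n) / nobs H * (\<Sum>\<phi>\<in>?P. A \<phi>)"
    by (rule mult_right_mono[OF lat_mass_one_sub_le]) (use assms(8) in \<open>auto intro: sum_nonneg\<close>)
  ultimately show ?thesis
    unfolding X_def by linarith
qed

lemma sum_Phi_set_fresh_obs_ge:
  assumes "2 \<le> h" "h \<le> H" "y < nobs H" "(h, y) \<notin> S" "finite S" "card {z. (h, z) \<in> S} \<le> n"
    and "\<And>l. depends_only S (\<lambda>\<phi>. B \<phi> l)" "\<And>\<phi> l. 0 \<le> B \<phi> l"
  shows "(1 - n / 2 ^ H) * (\<Sum>\<phi>\<in>Phi_set H. \<Sum>l\<in>UNIV. lat_mass l * B \<phi> l) \<le> (\<Sum>\<phi>\<in>Phi_set H. B \<phi> (\<phi> h y))"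
proof -
  have "(1 - n / 2 ^ H) * (\<Sum>\<phi>\<in>Phi_set H. \<Sum>l\<in>UNIV. lat_mass l * B \<phi> l)
      = (\<Sum>l\<in>UNIV. lat_mass l * (1 - n / 2 ^ H) * (\<Sum>\<phi>\<in>Phi_set H. B \<phi> l))"
    by (subst sum.swap) (simp add: sum_distrib_left sum_distrib_right mult_ac)
  also have "\<dots> \<le> (\<Sum>l\<in>UNIV. \<Sum>\<phi>\<in>Phi_set H. B \<phi> l * of_bool (\<phi> h y = l))"
    by (intro sum_mono sum_Phi_set_obs_eq_ge[OF assms(1-6)] assms(7,8))
  also have "\<dots> = (\<Sum>\<phi>\<in>Phi_set H. B \<phi> (\<phi> h y))"
    by (subst sum.swap) simp
  finally show ?thesis .
qed

text \<open>The reward part of \<open>episode_ratio\<close> along the latent path that the actions induce from \<open>l\<close>;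
  unlike \<open>episode_ratio\<close> it does not involve the decoder.\<close>
fun latent_ratio :: "nat \<Rightarrow> bool list \<Rightarrow> nat \<Rightarrow> lat \<Rightarrow> step list \<Rightarrow> real" where
  "latent_ratio H \<pi> h l [] = 1"
| "latent_ratio H \<pi> h l [(x, a, r)] = reward_ratio H \<pi> h l a r"
| "latent_ratio H \<pi> h l ((x, a, r) # s # rest) =
     reward_ratio H \<pi> h l a r * latent_ratio H \<pi> (Suc h) (next_lat \<pi> h l a) (s # rest)"

lemma latent_ratio_nonneg: "0 \<le> latent_ratio H \<pi> h l s"
  by (induction H \<pi> h l s rule: latent_ratio.induct) (simp_all add: reward_ratio_nonneg)

lemma latent_ratio_Bs: "h + length s \<le> H + 1 \<Longrightarrow> latent_ratio H \<pi> h Bs s = 1"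
  by (induction H \<pi> h Bs s rule: latent_ratio.induct)
    (simp_all add: reward_ratio_def reward_pmf_def next_lat_def)

lemma latent_ratio_Gs_add_Ds:
  "h + length s = H + 1 \<Longrightarrow> s \<noteq> [] \<Longrightarrow> latent_ratio H \<pi> h Gs s + latent_ratio H \<pi> h Ds s = 2"
proof (induction s arbitrary: h)
  case (Cons st rest)
  obtain x a r where st: "st = (x, a, r)"
    by (cases st)
  show ?case
  proof (cases rest)
    case Nil
    with Cons.prems have "h = H"
      by simp
    with Nil st show ?thesis
      by (cases r; cases "a = \<pi> ! (H - 1)") (simp_all add: reward_ratio_def reward_pmf_def)
  next
    case (Cons s' rest')
    with Cons.prems have "h < H"
      by simp
    show ?thesis
    proof (cases "a = \<pi> ! (h - 1)")
      case True
      with Cons.IH[of "Suc h"] Cons.prems \<open>h < H\<close> \<open>rest = s' # rest'\<close> st show ?thesis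
        by (simp add: reward_ratio_def next_lat_def)
    next
      case False
      with latent_ratio_Bs[of "Suc h" rest H] Cons.prems \<open>h < H\<close> \<open>rest = s' # rest'\<close> st show ?thesis
        by (simp add: reward_ratio_def next_lat_def)
    qed
  qed
qed simp

lemma sum_lat_mass_latent_ratio:
  assumes "h + length s = H + 1" "s \<noteq> []"
  shows "(\<Sum>l\<in>UNIV. lat_mass l * latent_ratio H \<pi> h l s) = 1"
  using latent_ratio_Gs_add_Ds[OF assms, of \<pi>] latent_ratio_Bs[of h s H \<pi>] assms(1)
  by (simp add: sum_lat lat_mass_def)

fun deviates :: "bool list \<Rightarrow> nat \<Rightarrow> step list \<Rightarrow> bool" where
  "deviates \<pi> h [] \<longleftrightarrow> False"
| "deviates \<pi> h [s] \<longleftrightarrow> False"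
| "deviates \<pi> h ((x, a, r) # s # rest) \<longleftrightarrow> a \<noteq> \<pi> ! (h - 1) \<or> deviates \<pi> (Suc h) (s # rest)"

lemma latent_ratio_Gs_deviates:
  "h + length s \<le> H + 1 \<Longrightarrow> deviates \<pi> h s \<Longrightarrow> latent_ratio H \<pi> h Gs s = 1"
proof (induction \<pi> h s rule: deviates.induct)
  case (3 \<pi> h x a r s rest)
  then show ?case
    using latent_ratio_Bs[of "Suc h" "s # rest" H \<pi>]
    by (cases "a = \<pi> ! (h - 1)") (simp_all add: reward_ratio_def next_lat_def)
qed simp_all

lemma nth_eq_of_not_deviates:
  "\<not> deviates \<pi> h s \<Longrightarrow> i + 1 < length s \<Longrightarrow> \<pi> ! (h + i - 1) = fst (snd (s ! i))"
proof (induction \<pi> h s arbitrary: i rule: deviates.induct)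
  case (3 \<pi> h x a r s rest)
  then show ?case
    by (cases i) auto
qed simp_all

lemma sum_lat_mass_emission_ratio:
  "(\<Sum>l\<in>UNIV. lat_mass l * (emission_ratio \<pi> h l0 a l * f l)) = f (next_lat \<pi> h l0 a)"
proof -
  have "lat_mass l * emission_ratio \<pi> h l0 a l = of_bool (l = next_lat \<pi> h l0 a)" for l
    using lat_mass_pos[of l] by (cases "l = next_lat \<pi> h l0 a") (simp_all add: emission_ratio_def)
  then show ?thesis
    by (simp add: mult.assoc[symmetric])
qed

lemma depends_only_mono: "depends_only S F \<Longrightarrow> S \<subseteq> S' \<Longrightarrow> depends_only S' F"
  unfolding depends_only_def by blast

lemma depends_only_mult_const: "depends_only S F \<Longrightarrow> depends_only S (\<lambda>\<phi>. F \<phi> * c)"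
  unfolding depends_only_def by metis

lemma depends_only_insert_eval:
  assumes "\<And>l. depends_only S (\<lambda>\<phi>. B \<phi> l)"
  shows "depends_only (insert (h, x) S) (\<lambda>\<phi>. G (\<phi> h x) (B \<phi> (\<phi> h x)))"
  unfolding depends_only_def
proof (intro allI impI)
  fix \<phi> \<phi>' :: "nat \<Rightarrow> nat \<Rightarrow> lat"
  assume agree: "\<forall>(h', z)\<in>insert (h, x) S. \<phi> h' z = \<phi>' h' z"
  then have "\<phi> h x = \<phi>' h x"
    by auto
  moreover have "B \<phi> (\<phi> h x) = B \<phi>' (\<phi> h x)"
    using assms[of "\<phi> h x"] agree unfolding depends_only_def by auto
  ultimately show "G (\<phi> h x) (B \<phi> (\<phi> h x)) = G (\<phi>' h x) (B \<phi>' (\<phi>' h x))"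
    by simp
qed

lemma sum_Phi_set_emission_step:
  assumes "1 \<le> h" "h < H" "x' < nobs H" "(h, x) \<in> S" "(Suc h, x') \<notin> S" "finite S"
    "card {z. (Suc h, z) \<in> S} \<le> n" "\<And>l. depends_only S (\<lambda>\<phi>. B \<phi> l)" "\<And>\<phi> l. 0 \<le> B \<phi> l"
  shows "(1 - n / 2 ^ H) * (\<Sum>\<phi>\<in>Phi_set H. B \<phi> (\<phi> h x) * latent_ratio H \<pi> h (\<phi> h x) ((x, a, r) # (x', a', r') # rest))
    \<le> (\<Sum>\<phi>\<in>Phi_set H. B \<phi> (\<phi> h x) * reward_ratio H \<pi> h (\<phi> h x) a r * emission_ratio \<pi> h (\<phi> h x) a (\<phi> (Suc h) x')
        * latent_ratio H \<pi> (Suc h) (\<phi> (Suc h) x') ((x', a', r') # rest))"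
proof -
  define C where "C \<phi> l = B \<phi> (\<phi> h x) * reward_ratio H \<pi> h (\<phi> h x) a r * emission_ratio \<pi> h (\<phi> h x) a l
    * latent_ratio H \<pi> (Suc h) l ((x', a', r') # rest)" for \<phi> l
  have "(\<Sum>l\<in>UNIV. lat_mass l * C \<phi> l) = B \<phi> (\<phi> h x) * latent_ratio H \<pi> h (\<phi> h x) ((x, a, r) # (x', a', r') # rest)"
    for \<phi>
  proof -
    have "(\<Sum>l\<in>UNIV. lat_mass l * C \<phi> l) = B \<phi> (\<phi> h x) * reward_ratio H \<pi> h (\<phi> h x) a r
        * (\<Sum>l\<in>UNIV. lat_mass l * (emission_ratio \<pi> h (\<phi> h x) a l * latent_ratio H \<pi> (Suc h) l ((x', a', r') # rest)))"
      by (simp add: C_def sum_distrib_left mult_ac)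
    then show ?thesis
      by (simp add: sum_lat_mass_emission_ratio)
  qed
  moreover have "(1 - n / 2 ^ H) * (\<Sum>\<phi>\<in>Phi_set H. \<Sum>l\<in>UNIV. lat_mass l * C \<phi> l) \<le> (\<Sum>\<phi>\<in>Phi_set H. C \<phi> (\<phi> (Suc h) x'))"
  proof (rule sum_Phi_set_fresh_obs_ge)
    show "depends_only S (\<lambda>\<phi>. C \<phi> l)" for l
      using depends_only_insert_eval[OF assms(8), of h x "\<lambda>l0 b. b * reward_ratio H \<pi> h l0 a r
        * emission_ratio \<pi> h l0 a l * latent_ratio H \<pi> (Suc h) l ((x', a', r') # rest)"] assms(4)
      by (simp add: C_def insert_absorb)
    show "0 \<le> C \<phi> l" for \<phi> l
      using assms(9) by (simp add: C_def reward_ratio_nonneg emission_ratio_nonneg latent_ratio_nonneg)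
  qed (use assms in auto)
  ultimately show ?thesis
    by (simp add: C_def)
qed

text \<open>Every later observation of the episode is fresh, so its decoded latent state can be resampled
  from \<open>lat_mass\<close> at the cost of a factor \<open>1 - n / 2\<^sup>H\<close>; the emission ratio then puts it
  on the latent path.\<close>
lemma sum_Phi_set_latent_ratio_le_episode_ratio:
  assumes "real n \<le> 2 ^ H"
  shows "1 \<le> h \<Longrightarrow> h + length rest \<le> H \<Longrightarrow> finite S \<Longrightarrow>
    \<forall>p\<in>step_obs (Suc h) rest. p \<notin> S \<and> snd p < nobs H \<and> card {z. (fst p, z) \<in> S} \<le> n \<Longrightarrow>
    (\<And>l. depends_only S (\<lambda>\<phi>. B \<phi> l)) \<Longrightarrow> (\<And>\<phi> l. 0 \<le> B \<phi> l) \<Longrightarrow>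
    (1 - n / 2 ^ H) ^ length rest * (\<Sum>\<phi>\<in>Phi_set H. B \<phi> (\<phi> h x) * latent_ratio H \<pi> h (\<phi> h x) ((x, a, r) # rest))
      \<le> (\<Sum>\<phi>\<in>Phi_set H. B \<phi> (\<phi> h x) * episode_ratio H (\<pi>, \<phi>) h ((x, a, r) # rest))"
proof (induction rest arbitrary: h x a r B S)
  case (Cons s rest)
  obtain x' a' r' where s: "s = (x', a', r')"
    by (cases s)
  let ?c = "1 - real n / 2 ^ H"
  let ?S' = "insert (h, x) S"
  define B' where "B' \<phi> l = B \<phi> (\<phi> h x) * reward_ratio H \<pi> h (\<phi> h x) a r * emission_ratio \<pi> h (\<phi> h x) a l" for \<phi> l
  have obs: "step_obs (Suc h) (s # rest) = insert (Suc h, x') (step_obs (Suc (Suc h)) rest)"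
    by (simp add: s)
  have B': "depends_only ?S' (\<lambda>\<phi>. B' \<phi> l)" "0 \<le> B' \<phi> l" for \<phi> l
    using depends_only_insert_eval[OF Cons.prems(5), of h x "\<lambda>l0 b. b * reward_ratio H \<pi> h l0 a r * emission_ratio \<pi> h l0 a l"]
      Cons.prems(6) by (simp_all add: B'_def reward_ratio_nonneg emission_ratio_nonneg)
  have "\<forall>p\<in>step_obs (Suc (Suc h)) rest. p \<notin> ?S' \<and> snd p < nobs H \<and> card {z. (fst p, z) \<in> ?S'} \<le> n"
  proof
    fix p assume p: "p \<in> step_obs (Suc (Suc h)) rest"
    then have "fst p \<noteq> h"
      using step_obs_layer_ge[OF p] by simp
    moreover have "p \<notin> S \<and> snd p < nobs H \<and> card {z. (fst p, z) \<in> S} \<le> n"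
      using Cons.prems(4) p by (simp add: obs)
    ultimately show "p \<notin> ?S' \<and> snd p < nobs H \<and> card {z. (fst p, z) \<in> ?S'} \<le> n"
      by (cases p) simp
  qed
  then have IH: "?c ^ length rest * (\<Sum>\<phi>\<in>Phi_set H. B' \<phi> (\<phi> (Suc h) x') * latent_ratio H \<pi> (Suc h) (\<phi> (Suc h) x') ((x', a', r') # rest))
      \<le> (\<Sum>\<phi>\<in>Phi_set H. B' \<phi> (\<phi> (Suc h) x') * episode_ratio H (\<pi>, \<phi>) (Suc h) ((x', a', r') # rest))"
    using Cons.prems(1-3) B' by (intro Cons.IH[where h = "Suc h" and B = B' and S = ?S']) auto
  have step: "?c * (\<Sum>\<phi>\<in>Phi_set H. B \<phi> (\<phi> h x) * latent_ratio H \<pi> h (\<phi> h x) ((x, a, r) # s # rest))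
      \<le> (\<Sum>\<phi>\<in>Phi_set H. B' \<phi> (\<phi> (Suc h) x') * latent_ratio H \<pi> (Suc h) (\<phi> (Suc h) x') ((x', a', r') # rest))"
    unfolding s B'_def
    by (rule sum_Phi_set_emission_step[where S = ?S'])
      (use Cons.prems obs in \<open>auto intro: depends_only_mono simp: s\<close>)
  have "?c ^ length (s # rest) * (\<Sum>\<phi>\<in>Phi_set H. B \<phi> (\<phi> h x) * latent_ratio H \<pi> h (\<phi> h x) ((x, a, r) # s # rest))
      \<le> ?c ^ length rest * (\<Sum>\<phi>\<in>Phi_set H. B' \<phi> (\<phi> (Suc h) x') * latent_ratio H \<pi> (Suc h) (\<phi> (Suc h) x') ((x', a', r') # rest))"
    using mult_left_mono[OF step zero_le_power[of ?c "length rest"]] assms by (simp add: mult_ac)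
  also have "\<dots> \<le> (\<Sum>\<phi>\<in>Phi_set H. B \<phi> (\<phi> h x) * episode_ratio H (\<pi>, \<phi>) h ((x, a, r) # s # rest))"
    using IH by (simp add: s B'_def mult_ac)
  finally show ?case .
qed simp

lemma episode_ratio_cong:
  "\<forall>(h', z)\<in>step_obs h steps. \<phi> h' z = \<phi>' h' z \<Longrightarrow>
    episode_ratio H (\<pi>, \<phi>) h steps = episode_ratio H (\<pi>, \<phi>') h steps"
  by (induction "\<lambda>h x a r. reward_ratio H \<pi> h (\<phi> h x) a r"
      "\<lambda>h x a x'. emission_ratio \<pi> h (\<phi> h x) a (\<phi> (Suc h) x')" h steps
      rule: steps_ratio.induct) auto

lemma history_ratio_depends_only: "depends_only (history_obs es) (\<lambda>\<phi>. history_ratio H (\<pi>, \<phi>) es)"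
  unfolding depends_only_def
proof (intro allI impI)
  fix \<phi> \<phi>' :: "nat \<Rightarrow> nat \<Rightarrow> lat"
  assume "\<forall>(h, z)\<in>history_obs es. \<phi> h z = \<phi>' h z"
  then show "history_ratio H (\<pi>, \<phi>) es = history_ratio H (\<pi>, \<phi>') es"
  proof (induction es)
    case (Cons e es)
    then have "episode_ratio H (\<pi>, \<phi>) (fst e) (snd e) = episode_ratio H (\<pi>, \<phi>') (fst e) (snd e)"
      by (intro episode_ratio_cong) (auto simp: history_obs_def episode_obs_def)
    with Cons show ?case
      by (simp add: history_obs_def)
  qed (simp add: history_ratio_def)
qed

text \<open>What remains of an episode's ratio after averaging over decoders: an episode from a reset
  starts in a latent state with law \<open>lat_mass\<close>, for which the reward ratios average to 1, whereas an
  episode from layer 1 starts in \<open>Gs\<close>.\<close>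
definition policy_weight :: "nat \<Rightarrow> bool list \<Rightarrow> episode \<Rightarrow> real" where
  "policy_weight H \<pi> e = (if fst e = 1 then latent_ratio H \<pi> 1 Gs (snd e) else 1)"

lemma policy_weight_nonneg: "0 \<le> policy_weight H \<pi> e"
  by (simp add: policy_weight_def latent_ratio_nonneg)

lemma sum_Phi_set_first_obs_ge:
  assumes wf: "wf_episode H (h0, (x, a, r) # rest)" and "(h0, x) \<notin> S" "finite S" "card {z. (h0, z) \<in> S} \<le> n"
    and "depends_only S A" "\<And>\<phi>. 0 \<le> A \<phi>" "real n \<le> 2 ^ H"
  shows "(1 - n / 2 ^ H) * (\<Sum>\<phi>\<in>Phi_set H. A \<phi>) * policy_weight H \<pi> (h0, (x, a, r) # rest)
    \<le> (\<Sum>\<phi>\<in>Phi_set H. A \<phi> * latent_ratio H \<pi> h0 (\<phi> h0 x) ((x, a, r) # rest))"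
proof -
  let ?c = "1 - real n / 2 ^ H"
  let ?P = "Phi_set H"
  have h0: "1 \<le> h0" "h0 \<le> H" "h0 + length rest = H" and "x < nobs H"
    using wf by (auto simp: wf_episode_def)
  show ?thesis
  proof (cases "h0 = 1")
    case True
    have "(\<Sum>\<phi>\<in>?P. A \<phi>) * policy_weight H \<pi> (h0, (x, a, r) # rest)
        = (\<Sum>\<phi>\<in>?P. A \<phi> * latent_ratio H \<pi> h0 (\<phi> h0 x) ((x, a, r) # rest))"
      unfolding sum_distrib_right
    proof (rule sum.cong[OF refl])
      fix \<phi> assume "\<phi> \<in> ?P"
      then have "\<phi> h0 x = Gs"
        using Phi_set_layer1[OF _ \<open>x < nobs H\<close>] True by simp
      with True show "A \<phi> * policy_weight H \<pi> (h0, (x, a, r) # rest) = A \<phi> * latent_ratio H \<pi> h0 (\<phi> h0 x) ((x, a, r) # rest)"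
        by (simp add: policy_weight_def)
    qed
    moreover have "0 \<le> (\<Sum>\<phi>\<in>?P. A \<phi>) * policy_weight H \<pi> (h0, (x, a, r) # rest)"
      using assms(6) policy_weight_nonneg by (simp add: sum_nonneg)
    ultimately show ?thesis
      using \<open>real n \<le> 2 ^ H\<close> by (simp add: mult.assoc mult_left_le_one_le)
  next
    case False
    have "?c * (\<Sum>\<phi>\<in>?P. \<Sum>l\<in>UNIV. lat_mass l * (A \<phi> * latent_ratio H \<pi> h0 l ((x, a, r) # rest)))
        \<le> (\<Sum>\<phi>\<in>?P. A \<phi> * latent_ratio H \<pi> h0 (\<phi> h0 x) ((x, a, r) # rest))"
      using False h0 \<open>x < nobs H\<close> assms(2-6) latent_ratio_nonneg
      by (intro sum_Phi_set_fresh_obs_ge depends_only_mult_const) auto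
    moreover have "(\<Sum>l\<in>UNIV. lat_mass l * (A \<phi> * latent_ratio H \<pi> h0 l ((x, a, r) # rest))) = A \<phi>" for \<phi>
      using sum_lat_mass_latent_ratio[of h0 "(x, a, r) # rest" H \<pi>] h0
      by (simp add: sum_distrib_left[symmetric] mult.left_commute)
    ultimately show ?thesis
      using False by (simp add: policy_weight_def)
  qed
qed

lemma sum_Phi_set_episode_ratio_ge:
  assumes wf: "wf_episode H e" and "finite S" and fresh: "episode_obs e \<inter> S = {}"
    and layer: "\<forall>p\<in>episode_obs e. card {z. (fst p, z) \<in> S} \<le> n"
    and "depends_only S A" "\<And>\<phi>. 0 \<le> A \<phi>" "real n \<le> 2 ^ H"
  shows "(1 - n / 2 ^ H) ^ H * (\<Sum>\<phi>\<in>Phi_set H. A \<phi>) * policy_weight H \<pi> e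
    \<le> (\<Sum>\<phi>\<in>Phi_set H. A \<phi> * episode_ratio H (\<pi>, \<phi>) (fst e) (snd e))"
proof -
  let ?c = "1 - real n / 2 ^ H"
  let ?P = "Phi_set H"
  obtain h0 x a r rest where e: "e = (h0, (x, a, r) # rest)"
    using wf by (cases e; cases "snd e") (auto simp: wf_episode_def)
  have h0: "1 \<le> h0" "h0 + length rest = H" and obs: "\<forall>s\<in>set rest. fst s < nobs H"
    using wf by (auto simp: wf_episode_def e)
  have episode_obs: "episode_obs e = insert (h0, x) (step_obs (Suc h0) rest)"
    by (simp add: episode_obs_def e)
  have "0 \<le> ?c" "?c \<le> 1"
    using \<open>real n \<le> 2 ^ H\<close> by simp_all
  have first: "?c * (\<Sum>\<phi>\<in>?P. A \<phi>) * policy_weight H \<pi> e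
      \<le> (\<Sum>\<phi>\<in>?P. A \<phi> * latent_ratio H \<pi> h0 (\<phi> h0 x) ((x, a, r) # rest))"
    unfolding e using wf fresh layer assms(2,5-7) by (intro sum_Phi_set_first_obs_ge) (auto simp: e episode_obs_def)
  have "?c ^ H * (\<Sum>\<phi>\<in>?P. A \<phi>) * policy_weight H \<pi> e \<le> ?c ^ Suc (length rest) * ((\<Sum>\<phi>\<in>?P. A \<phi>) * policy_weight H \<pi> e)"
    unfolding mult.assoc using h0 \<open>0 \<le> ?c\<close> \<open>?c \<le> 1\<close> assms(6) policy_weight_nonneg
    by (intro mult_right_mono power_decreasing mult_nonneg_nonneg sum_nonneg) auto
  also have "\<dots> \<le> ?c ^ length rest * (\<Sum>\<phi>\<in>?P. A \<phi> * latent_ratio H \<pi> h0 (\<phi> h0 x) ((x, a, r) # rest))"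
    using mult_left_mono[OF first zero_le_power[OF \<open>0 \<le> ?c\<close>, of "length rest"]] by (simp add: mult_ac)
  also have "\<dots> \<le> (\<Sum>\<phi>\<in>?P. A \<phi> * episode_ratio H (\<pi>, \<phi>) (fst e) (snd e))"
    unfolding e fst_conv snd_conv
    by (rule sum_Phi_set_latent_ratio_le_episode_ratio[OF \<open>real n \<le> 2 ^ H\<close>, where B = "\<lambda>\<phi> l. A \<phi>"])
      (use h0 assms(2,5,6) fresh layer step_obs_obs_bound[OF obs] in \<open>auto simp: episode_obs\<close>)
  finally show ?thesis .
qed

lemma sum_Phi_set_history_ratio_ge:
  assumes "real n \<le> 2 ^ H"
  shows "\<forall>e\<in>set es. wf_episode H e \<Longrightarrow> distinct_obs es \<Longrightarrow> length es \<le> n + 1 \<Longrightarrow>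
    ((1 - n / 2 ^ H) ^ H) ^ length es * card (Phi_set H) * (\<Prod>e\<leftarrow>es. policy_weight H \<pi> e)
      \<le> (\<Sum>\<phi>\<in>Phi_set H. history_ratio H (\<pi>, \<phi>) es)"
proof (induction es)
  case (Cons e es)
  let ?c = "(1 - real n / 2 ^ H) ^ H"
  have "0 \<le> ?c"
    using assms by simp
  have IH: "?c ^ length es * card (Phi_set H) * (\<Prod>e\<leftarrow>es. policy_weight H \<pi> e)
      \<le> (\<Sum>\<phi>\<in>Phi_set H. history_ratio H (\<pi>, \<phi>) es)"
    using Cons by simp
  have step: "?c * (\<Sum>\<phi>\<in>Phi_set H. history_ratio H (\<pi>, \<phi>) es) * policy_weight H \<pi> e
      \<le> (\<Sum>\<phi>\<in>Phi_set H. history_ratio H (\<pi>, \<phi>) es * episode_ratio H (\<pi>, \<phi>) (fst e) (snd e))"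
  proof (rule sum_Phi_set_episode_ratio_ge[OF _ finite_history_obs _ _ history_ratio_depends_only
        history_ratio_nonneg assms])
    show "\<forall>p\<in>episode_obs e. card {z. (fst p, z) \<in> history_obs es} \<le> n"
      using card_history_obs_layer[of _ es] Cons.prems(3) by (auto intro: le_trans)
  qed (use Cons.prems in auto)
  have "?c ^ length (e # es) * card (Phi_set H) * (\<Prod>e\<leftarrow>e # es. policy_weight H \<pi> e)
      = (?c * policy_weight H \<pi> e) * (?c ^ length es * card (Phi_set H) * (\<Prod>e\<leftarrow>es. policy_weight H \<pi> e))"
    by (simp add: mult_ac)
  also have "\<dots> \<le> (?c * policy_weight H \<pi> e) * (\<Sum>\<phi>\<in>Phi_set H. history_ratio H (\<pi>, \<phi>) es)"
    using IH \<open>0 \<le> ?c\<close> policy_weight_nonneg by (intro mult_left_mono) auto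
  also have "\<dots> \<le> (\<Sum>\<phi>\<in>Phi_set H. history_ratio H (\<pi>, \<phi>) (e # es))"
    using step by (simp add: mult_ac)
  finally show ?case .
qed (simp add: history_ratio_def)

section \<open>Averaging over policies\<close>

definition Pi_last :: "nat \<Rightarrow> bool \<Rightarrow> bool list set" where
  "Pi_last H b = {\<pi>. length \<pi> = H \<and> \<pi> ! (H - 1) = b}"

lemma Theta0_eq: "Theta0 H = Pi_last H False \<times> Phi_set H"
  by (auto simp: Theta0_def Pi_last_def Pi_set_def)

lemma Theta1_eq: "Theta1 H = Pi_last H True \<times> Phi_set H"
  by (auto simp: Theta1_def Pi_last_def Pi_set_def)

lemma finite_Pi_last: "finite (Pi_last H b)"
  by (rule finite_subset[OF _ finite_lists_length_eq[of "UNIV :: bool set" H]]) (auto simp: Pi_last_def)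

lemma card_Pi_last_ge:
  assumes "1 \<le> H"
  shows "2 ^ (H - 1) \<le> card (Pi_last H b)"
proof -
  have "inj (\<lambda>w :: bool list. w @ [b])"
    by (auto intro: injI)
  moreover have "card {w. set w \<subseteq> (UNIV :: bool set) \<and> length w = H - 1} = 2 ^ (H - 1)"
    using card_lists_length_eq[of "UNIV :: bool set" "H - 1"] by simp
  ultimately have "card ((\<lambda>w. w @ [b]) ` {w. set w \<subseteq> UNIV \<and> length w = H - 1}) = 2 ^ (H - 1)"
    by (simp add: card_image inj_on_subset)
  moreover have "card ((\<lambda>w. w @ [b]) ` {w. set w \<subseteq> UNIV \<and> length w = H - 1}) \<le> card (Pi_last H b)"
    by (rule card_mono[OF finite_Pi_last]) (use assms in \<open>auto simp: Pi_last_def nth_append\<close>)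
  ultimately show ?thesis
    by simp
qed

lemma card_not_deviates_le_1:
  assumes "length s = H" "1 \<le> H"
  shows "card {\<pi> \<in> Pi_last H b. \<not> deviates \<pi> 1 s} \<le> 1"
proof -
  have "p = q" if "p \<in> {\<pi> \<in> Pi_last H b. \<not> deviates \<pi> 1 s}" "q \<in> {\<pi> \<in> Pi_last H b. \<not> deviates \<pi> 1 s}" for p q
  proof (rule nth_equalityI)
    show "length p = length q"
      using that by (simp add: Pi_last_def)
    fix i assume "i < length p"
    then show "p ! i = q ! i"
      using that nth_eq_of_not_deviates[of p 1 s i] nth_eq_of_not_deviates[of q 1 s i] assms
      by (cases "i = H - 1") (auto simp: Pi_last_def)
  qed
  then show ?thesis
    using finite_Pi_last[of H b] by (simp add: card_le_Suc0_iff_eq)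
qed

lemma sum_Pi_last_policy_weight_ge:
  assumes "1 \<le> H" "\<forall>e\<in>set es. wf_episode H e"
  shows "real (card (Pi_last H b)) - length es \<le> (\<Sum>\<pi>\<in>Pi_last H b. \<Prod>e\<leftarrow>es. policy_weight H \<pi> e)"
proof -
  let ?P = "Pi_last H b"
  define Bad where "Bad = (\<Union>e\<in>set es. {\<pi> \<in> ?P. fst e = 1 \<and> \<not> deviates \<pi> 1 (snd e)})"
  have "card Bad \<le> (\<Sum>e\<in>set es. card {\<pi> \<in> ?P. fst e = 1 \<and> \<not> deviates \<pi> 1 (snd e)})"
    unfolding Bad_def by (rule card_UN_le) simp
  also have "\<dots> \<le> (\<Sum>e\<in>set es. 1)"
  proof (rule sum_mono)
    fix e assume "e \<in> set es"
    with assms show "card {\<pi> \<in> ?P. fst e = 1 \<and> \<not> deviates \<pi> 1 (snd e)} \<le> 1"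
      using card_not_deviates_le_1[of "snd e" H b] by (cases "fst e = 1") (auto simp: wf_episode_def)
  qed
  also have "\<dots> \<le> length es"
    by (simp add: card_length)
  finally have "card Bad \<le> length es" .
  have "(\<Prod>e\<leftarrow>es. policy_weight H \<pi> e) = 1" if "\<pi> \<in> ?P - Bad" for \<pi>
  proof -
    have "policy_weight H \<pi> e = 1" if "e \<in> set es" for e
      using \<open>\<pi> \<in> ?P - Bad\<close> that assms(2) latent_ratio_Gs_deviates[of 1 "snd e" H \<pi>]
      by (auto simp: Bad_def policy_weight_def wf_episode_def)
    then show ?thesis
      by (induction es) auto
  qed
  then have "real (card (?P - Bad)) = (\<Sum>\<pi>\<in>?P - Bad. \<Prod>e\<leftarrow>es. policy_weight H \<pi> e)"
    by simp
  also have "\<dots> \<le> (\<Sum>\<pi>\<in>?P. \<Prod>e\<leftarrow>es. policy_weight H \<pi> e)"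
    using finite_Pi_last policy_weight_nonneg by (intro sum_mono2 prod_list_nonneg) auto
  moreover have "card ?P \<le> card (?P - Bad) + card Bad"
    by (rule order_trans[OF card_mono card_Un_le]) (use finite_Pi_last in \<open>auto simp: Bad_def\<close>)
  ultimately show ?thesis
    using \<open>card Bad \<le> length es\<close> by linarith
qed

lemma avg_Pi_last_policy_weight_ge:
  assumes "1 \<le> H" "\<forall>e\<in>set es. wf_episode H e"
  shows "1 - 2 * length es / 2 ^ H \<le> (\<Sum>\<pi>\<in>Pi_last H b. \<Prod>e\<leftarrow>es. policy_weight H \<pi> e) / card (Pi_last H b)"
proof -
  let ?N = "real (card (Pi_last H b))"
  have "(2::real) ^ (H - 1) \<le> ?N"
    using card_Pi_last_ge[OF assms(1), of b] by (metis of_nat_le_iff of_nat_numeral of_nat_power)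
  moreover have "(2::real) ^ H = 2 * 2 ^ (H - 1)"
    using assms(1) by (simp add: power_eq_if)
  ultimately have "length es / ?N \<le> 2 * length es / 2 ^ H"
    by (simp add: frac_le)
  moreover have "0 < ?N"
    using \<open>2 ^ (H - 1) \<le> ?N\<close> by (smt (verit) zero_less_power)
  then have "1 - length es / ?N = (?N - length es) / ?N"
    by (simp add: diff_divide_distrib)
  moreover have "\<dots> \<le> (\<Sum>\<pi>\<in>Pi_last H b. \<Prod>e\<leftarrow>es. policy_weight H \<pi> e) / ?N"
    using sum_Pi_last_policy_weight_ge[OF assms, of b] by (simp add: divide_right_mono)
  ultimately show ?thesis
    by linarith
qed

lemma one_sub_add_le_mult:
  fixes X Y a b :: real
  assumes "0 \<le> X" "1 - a \<le> X" "0 \<le> Y" "1 - b \<le> Y" "0 \<le> a" "0 \<le> b"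
  shows "1 - a - b \<le> X * Y"
proof (cases "a \<le> 1 \<and> b \<le> 1")
  case True
  then have "(1 - a) * (1 - b) \<le> X * Y"
    using assms by (intro mult_mono) auto
  moreover have "1 - a - b \<le> (1 - a) * (1 - b)"
    using assms by (simp add: algebra_simps)
  ultimately show ?thesis
    by linarith
next
  case False
  with assms show ?thesis
    by (smt (verit) zero_le_mult_iff)
qed

lemma avg_history_ratio_ge_mult:
  assumes "1 \<le> H" "\<forall>e\<in>set es. wf_episode H e" "distinct_obs es" "real (length es) \<le> 2 ^ H"
  shows "((1 - length es / 2 ^ H) ^ H) ^ length es * ((\<Sum>\<pi>\<in>Pi_last H b. \<Prod>e\<leftarrow>es. policy_weight H \<pi> e) / card (Pi_last H b))
    \<le> (\<Sum>\<theta>\<in>Pi_last H b \<times> Phi_set H. history_ratio H \<theta> es) / card (Pi_last H b \<times> Phi_set H)"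
proof -
  let ?X = "((1 - length es / 2 ^ H) ^ H) ^ length es"
  let ?W = "\<Sum>\<pi>\<in>Pi_last H b. \<Prod>e\<leftarrow>es. policy_weight H \<pi> e"
  have "?X * card (Phi_set H) * ?W \<le> (\<Sum>\<pi>\<in>Pi_last H b. \<Sum>\<phi>\<in>Phi_set H. history_ratio H (\<pi>, \<phi>) es)"
    unfolding sum_distrib_left
    by (intro sum_mono sum_Phi_set_history_ratio_ge[OF assms(4)]) (use assms in auto)
  also have "\<dots> = (\<Sum>\<theta>\<in>Pi_last H b \<times> Phi_set H. history_ratio H \<theta> es)"
    by (simp add: sum.cartesian_product)
  finally have "?X * card (Phi_set H) * ?W / card (Pi_last H b \<times> Phi_set H)
      \<le> (\<Sum>\<theta>\<in>Pi_last H b \<times> Phi_set H. history_ratio H \<theta> es) / card (Pi_last H b \<times> Phi_set H)"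
    by (rule divide_right_mono) simp
  moreover have "?X * card (Phi_set H) * ?W / card (Pi_last H b \<times> Phi_set H) = ?X * (?W / card (Pi_last H b))"
    using Phi_set_nonempty[OF assms(1)] finite_Phi_set[of H] by (simp add: card_cartesian_product)
  ultimately show ?thesis
    by simp
qed

lemma one_sub_le_power_power:
  assumes "real T \<le> 2 ^ H"
  shows "1 - real H * T * T / 2 ^ H \<le> ((1 - T / 2 ^ H) ^ H) ^ T"
proof -
  have "1 + real (H * T) * (- (T / 2 ^ H)) \<le> (1 + - (T / 2 ^ H)) ^ (H * T)"
    by (rule Bernoulli_inequality) (use assms in simp)
  then show ?thesis
    by (simp add: power_mult mult.assoc)
qed

lemma avg_history_ratio_ge:
  assumes "1 \<le> H" "\<forall>e\<in>set es. wf_episode H e" "distinct_obs es"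
  shows "1 - (real H * length es * length es + 2 * length es) / 2 ^ H
    \<le> (\<Sum>\<theta>\<in>Pi_last H b \<times> Phi_set H. history_ratio H \<theta> es) / card (Pi_last H b \<times> Phi_set H)"
proof (cases "real (length es) \<le> 2 ^ H")
  case True
  let ?T = "length es"
  let ?X = "((1 - real ?T / 2 ^ H) ^ H) ^ ?T"
  let ?Y = "(\<Sum>\<pi>\<in>Pi_last H b. \<Prod>e\<leftarrow>es. policy_weight H \<pi> e) / card (Pi_last H b)"
  have "0 \<le> ?X" "0 \<le> ?Y"
    using True policy_weight_nonneg by (auto intro!: divide_nonneg_nonneg sum_nonneg prod_list_nonneg)
  then have "1 - real H * ?T * ?T / 2 ^ H - 2 * ?T / 2 ^ H \<le> ?X * ?Y"
    using one_sub_le_power_power[OF True] avg_Pi_last_policy_weight_ge[OF assms(1,2)]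
    by (intro one_sub_add_le_mult) auto
  moreover have "1 - (real H * ?T * ?T + 2 * ?T) / 2 ^ H = 1 - real H * ?T * ?T / 2 ^ H - 2 * ?T / 2 ^ H"
    by (simp add: add_divide_distrib)
  ultimately show ?thesis
    using avg_history_ratio_ge_mult[OF assms True, of b] by linarith
next
  case False
  moreover have "0 \<le> real H * length es * length es"
    by simp
  ultimately have "2 ^ H \<le> real H * length es * length es + 2 * length es"
    by linarith
  then have "1 - (real H * length es * length es + 2 * length es) / 2 ^ H \<le> 0"
    by (simp add: le_divide_eq)
  also have "0 \<le> (\<Sum>\<theta>\<in>Pi_last H b \<times> Phi_set H. history_ratio H \<theta> es) / card (Pi_last H b \<times> Phi_set H)"
    by (simp add: sum_nonneg history_ratio_nonneg)
  finally show ?thesis .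
qed

lemma mixture_close_to_ref:
  assumes "1 \<le> H" and st: "\<forall>hs. 1 \<le> st hs \<and> st hs \<le> H"
  shows "\<bar>measure_pmf.prob (bind_pmf (pmf_of_set (Pi_last H b \<times> Phi_set H)) (\<lambda>\<theta>. run H \<theta> st act T [])) A
      - measure_pmf.prob (sample_episodes (ref_episode H st act) T []) A\<bar>
    \<le> real (H + 1) * T * T / nobs H + (real H * T * T + 2 * real T) / 2 ^ H"
proof -
  let ?\<Theta> = "Pi_last H b \<times> Phi_set H"
  let ?Q = "sample_episodes (ref_episode H st act) T []"
  let ?\<delta> = "(real H * T * T + 2 * real T) / 2 ^ H"
  have "Pi_last H b \<noteq> {}"
    using card_Pi_last_ge[OF assms(1), of b] by auto
  then have \<Theta>: "finite ?\<Theta>" "?\<Theta> \<noteq> {}" "snd ` ?\<Theta> \<subseteq> Phi_set H"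
    using finite_Pi_last finite_Phi_set Phi_set_nonempty[OF assms(1)] by auto
  have "(1 - ?\<delta>) * pmf ?Q hs \<le> pmf (bind_pmf (pmf_of_set ?\<Theta>) (\<lambda>\<theta>. run H \<theta> st act T [])) hs"
    if "hs \<in> set_pmf ?Q" "hs \<notin> {hs. \<not> distinct_obs hs}" for hs
  proof -
    have "\<forall>e\<in>set (drop (length ([] :: episode list)) hs). wf_episode H e"
      by (rule sample_episodes_support[OF _ that(1)]) (use ref_episode_wf st in blast)
    then have "\<forall>e\<in>set hs. wf_episode H e"
      by simp
    moreover have "length hs = T"
      using sample_episodes_prefix[OF that(1)] by auto
    ultimately have "1 - ?\<delta> \<le> (\<Sum>\<theta>\<in>?\<Theta>. history_ratio H \<theta> hs) / card ?\<Theta>"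
      using avg_history_ratio_ge[OF assms(1), of hs b] that(2) by simp
    then have "(1 - ?\<delta>) * pmf ?Q hs \<le> pmf ?Q hs * ((\<Sum>\<theta>\<in>?\<Theta>. history_ratio H \<theta> hs) / card ?\<Theta>)"
      by (subst mult.commute) (rule mult_left_mono; simp)
    then show ?thesis
      unfolding pmf_mixture_ratio[OF \<Theta> st] .
  qed
  then have "\<bar>measure_pmf.prob (bind_pmf (pmf_of_set ?\<Theta>) (\<lambda>\<theta>. run H \<theta> st act T [])) A - measure_pmf.prob ?Q A\<bar>
      \<le> measure_pmf.prob ?Q {hs. \<not> distinct_obs hs} + ?\<delta>"
    by (rule abs_measure_pmf_diff_le_of_pmf_ge)
      (auto intro!: divide_nonneg_nonneg add_nonneg_nonneg mult_nonneg_nonneg)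
  moreover have "measure_pmf.prob ?Q {hs. \<not> distinct_obs hs} \<le> real (H + 1) * T * T / nobs H"
    using ref_collision_prob[OF st, of "[]" act T] by simp
  ultimately show ?thesis
    by linarith
qed

lemma error_terms_le_bound:
  assumes "1 \<le> H"
  shows "2 * (real (H + 1) * T * T / nobs H + (real H * T * T + 2 * real T) / 2 ^ H)
    \<le> real T ^ 4 * real H / 2 powr (real H - 10)"
proof (cases "T = 0")
  case False
  let ?t = "real T"
  have "1 \<le> ?t" "1 \<le> real H"
    using False assms by simp_all
  have t4: "?t \<le> ?t ^ 4" "?t * ?t \<le> ?t ^ 4"
    using \<open>1 \<le> ?t\<close> by (simp_all add: self_le_power power2_eq_square[symmetric] power_increasing)
  have "(real H + 1) * (?t * ?t) / 2 \<le> real H * ?t ^ 4"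
    using \<open>1 \<le> real H\<close> t4(2) by (intro order_trans[OF _ mult_mono[of "(real H + 1) / 2" "real H"]]) auto
  moreover have "real H * (?t * ?t) \<le> real H * ?t ^ 4"
    using t4(2) by (intro mult_left_mono) auto
  moreover have "?t \<le> real H * ?t ^ 4"
    using t4(1) \<open>1 \<le> real H\<close> mult_right_mono[of 1 "real H" "?t ^ 4"] by linarith
  moreover have "0 \<le> real H * ?t ^ 4"
    by simp
  ultimately have "(real H + 1) * (?t * ?t) / 2 + 2 * (real H * (?t * ?t)) + 4 * ?t \<le> 1024 * (real H * ?t ^ 4)"
    by linarith
  moreover have "2 * (real (H + 1) * T * T / nobs H + (real H * T * T + 2 * real T) / 2 ^ H)
      = ((real H + 1) * (?t * ?t) / 2 + 2 * (real H * (?t * ?t)) + 4 * ?t) / 2 ^ H"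
    by (simp add: nobs_def power_add field_simps)
  moreover have "real T ^ 4 * real H / 2 powr (real H - 10) = 1024 * (real H * ?t ^ 4) / 2 ^ H"
    by (simp add: powr_diff powr_realpow)
  ultimately show ?thesis
    by (simp add: divide_right_mono)
qed simp

theorem lemma12:
  fixes H T :: nat
    and st :: "episode list \<Rightarrow> nat"
    and act :: "episode list \<Rightarrow> step list \<Rightarrow> nat \<Rightarrow> bool"
    and out :: "episode list \<Rightarrow> bool list"
  assumes "1 \<le> H"
    and "\<forall>hs. 1 \<le> st hs \<and> st hs \<le> H"
    and "\<forall>hs. out hs \<in> Pi_set H"
  shows "D_TV (mix_law H (Theta0 H) st act out T) (mix_law H (Theta1 H) st act out T)
           \<le> real T ^ 4 * real H / 2 powr (real H - 10)"
proof -
  let ?M = "\<lambda>b. bind_pmf (pmf_of_set (Pi_last H b \<times> Phi_set H)) (\<lambda>\<theta>. run H \<theta> st act T [])"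
  let ?Q = "sample_episodes (ref_episode H st act) T []"
  let ?\<epsilon> = "real (H + 1) * T * T / nobs H + (real H * T * T + 2 * real T) / 2 ^ H"
  have law: "mix_law H (Pi_last H b \<times> Phi_set H) st act out T = map_pmf (\<lambda>hs. (hs, out hs)) (?M b)" for b
    by (simp add: mix_law_def law_def map_bind_pmf)
  have "\<bar>measure_pmf.prob (mix_law H (Theta0 H) st act out T) A - measure_pmf.prob (mix_law H (Theta1 H) st act out T) A\<bar>
      \<le> real T ^ 4 * real H / 2 powr (real H - 10)" for A
  proof -
    let ?B = "(\<lambda>hs. (hs, out hs)) -` A"
    have "\<bar>measure_pmf.prob (?M False) ?B - measure_pmf.prob ?Q ?B\<bar> \<le> ?\<epsilon>"
      and "\<bar>measure_pmf.prob (?M True) ?B - measure_pmf.prob ?Q ?B\<bar> \<le> ?\<epsilon>"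
      using mixture_close_to_ref[OF assms(1,2)] by blast+
    then have "\<bar>measure_pmf.prob (?M False) ?B - measure_pmf.prob (?M True) ?B\<bar> \<le> 2 * ?\<epsilon>"
      by (smt (verit))
    then show ?thesis
      unfolding Theta0_eq Theta1_eq law measure_map_pmf using error_terms_le_bound[OF assms(1), of T] by linarith
  qed
  then show ?thesis
    unfolding D_TV_def by (intro cSUP_least) auto
qed

end
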